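(* Let $d\ge 2$, $\varepsilon>0$, and let $f\in L^1_+(\mathbb{R}^d)\setminus\{0\}$ satisfy \[ \psi_\varepsilon*\log(f*\psi_\varepsilon)(v)=\lambda^{(0)}+\lambda^{(1)}\cdot v+\frac{\lambda^{(2)}}{2}|v|^2\qquad\text{for all }v\in\mathbb{R}^d, \] for some constants $\lambda^{(0)},\lambda^{(2)}\in\mathbb{R}$, $\lambda^{(1)}\in\mathbb{R}^d$. Then $f$ is a Maxwellian, $f=\mathcal{M}_{\rho,u,T}$, one has $\varepsilon|\lambda^{(2)}|<1$, and \[ \rho=\left(\frac{2\pi}{|\lambda^{(2)}|}\right)^{d/2}\exp\left\{\lambda^{(0)}+\frac{\varepsilon|\lambda^{(2)}|d}{2}-\frac{\varepsilon|\lambda^{(1)}|^2}{2(1-\varepsilon|\lambda^{(2)}|)}+\frac{|\lambda^{(1)}|^2}{2|\lambda^{(2)}|(1-\varepsilon|\lambda^{(2)}|)}\right\},\quad u=\frac{\lambda^{(1)}}{|\lambda^{(2)}|},\quad T=\frac{1}{|\lambda^{(2)}|}-\varepsilon . \]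
   Context: $\psi_\varepsilon(v)=(2\pi\varepsilon)^{-d/2}\exp(-|v|^2/(2\varepsilon))$ and $*$ denotes convolution on $\mathbb{R}^d$. The Maxwellian is $\mathcal{M}_{\rho,u,T}(v)=\frac{\rho}{(2\pi T)^{d/2}}\exp\left(-\frac{|v-u|^2}{2T}\right)$ with $\rho,T>0$, $u\in\mathbb{R}^d$. $L^1_+(\mathbb{R}^d)$ denotes nonnegative integrable functions. *)

theory Defs
  imports "HOL-Analysis.Analysis"
begin

definition psi :: "real \<Rightarrow> 'a::euclidean_space \<Rightarrow> real" where
  "psi \<epsilon> (v::'a) = (2 * pi * \<epsilon>) powr (- real DIM('a) / 2) * exp (- (norm v)\<^sup>2 / (2 * \<epsilon>))"

definition conv :: "('a::euclidean_space \<Rightarrow> real) \<Rightarrow> ('a \<Rightarrow> real) \<Rightarrow> 'a \<Rightarrow> real" where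
  "conv f g v = (\<integral>y. f y * g (v - y) \<partial>lborel)"

definition maxwellian :: "real \<Rightarrow> 'a::euclidean_space \<Rightarrow> real \<Rightarrow> 'a \<Rightarrow> real" where
  "maxwellian \<rho> u T (v::'a) = \<rho> / (2 * pi * T) powr (real DIM('a) / 2) * exp (- (norm (v - u))\<^sup>2 / (2 * T))"

end

theory Submission
  imports Defs "HOL-Probability.Distributions" "HOL-Complex_Analysis.Conformal_Mappings"
begin

text \<open>
  Put F = f * psi_eps. The hypothesis says that the heat flow started from ln F equals a quadratic
  polynomial at time eps. Since the heat flow of a quadratic polynomial is explicit, ln F - p has
  vanishing heat flow at time eps for a suitable quadratic p, and ln F - p is continuous of
  quadratic growth. Backward uniqueness for the heat equation forces ln F = p: by the semigroup
  property the Gaussian transform c |-> int K(y) exp(-c |v - y|^2) dy vanishes for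
  0 < c < 1/(2 eps), it is holomorphic in Re c > 0, hence vanishes for all c > 0, and letting the
  time tend to 0 recovers K. So F = exp p is a Gaussian; integrability of F makes it decaying,
  F = rho psi_S(. - u). The mass of F is that of f, and its second moment about u exceeds that of
  f by eps d rho, which gives S > eps. Finally f - rho psi_(S - eps)(. - u) is integrable with
  vanishing heat flow at time eps, hence zero by backward uniqueness once more.
\<close>

section \<open>The Gaussian kernel\<close>

lemma power2_norm_eq_sum_Basis:
  "(norm (x::'a::euclidean_space))\<^sup>2 = (\<Sum>b\<in>Basis. (x \<bullet> b)\<^sup>2)"
  by (simp add: power2_norm_eq_inner euclidean_inner[of x x] power2_eq_square[symmetric])

lemma psi_pos: "t > 0 \<Longrightarrow> psi t x > 0"
  by (simp add: psi_def)

lemma psi_nonneg: "t > 0 \<Longrightarrow> psi t x \<ge> 0"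
  using psi_pos[of t x] by simp

lemma abs_psi: "t > 0 \<Longrightarrow> \<bar>psi t x\<bar> = psi t x"
  using psi_nonneg[of t x] by simp

lemma psi_le: "t > 0 \<Longrightarrow> psi t x \<le> (2 * pi * t) powr (- real DIM('a) / 2)"
  for x :: "'a::euclidean_space"
  unfolding psi_def by (intro mult_left_le) auto

lemma psi_minus: "psi t (- x) = psi t x"
  by (simp add: psi_def)

lemma psi_minus_commute: "psi t (x - y) = psi t (y - x)"
  by (simp add: psi_def norm_minus_commute)

lemma continuous_on_psi [continuous_intros]: "continuous_on A (psi t)"
  unfolding psi_def divide_inverse by (intro continuous_intros)

lemma borel_measurable_psi [measurable]: "psi t \<in> borel_measurable borel"
  by (intro borel_measurable_continuous_onI continuous_on_psi)

lemma exp_eq_psi: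
  assumes "c > 0"
  shows "exp (- c * (norm x)\<^sup>2) = (pi / c) powr (real DIM('a) / 2) * psi (1 / (2 * c)) (x::'a::euclidean_space)"
proof -
  have "(pi / c) powr (real DIM('a) / 2) * (pi / c) powr (- real DIM('a) / 2) = 1"
    using assms by (simp add: powr_add[symmetric])
  then show ?thesis
    using assms by (simp add: psi_def mult.assoc[symmetric])
qed

lemma psi_eq_prod_normal_density:
  fixes m x :: "'a::euclidean_space"
  assumes t: "t > 0"
  shows "psi t (x - m) = (\<Prod>b\<in>Basis. normal_density (m \<bullet> b) (sqrt t) (x \<bullet> b))"
proof -
  have root: "1 / sqrt (2 * pi * t) = (2 * pi * t) powr (- 1 / 2)"
    using t by (simp add: powr_half_sqrt[symmetric] powr_minus_divide)
  have "(\<Prod>b\<in>Basis. normal_density (m \<bullet> b) (sqrt t) (x \<bullet> b))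
      = (\<Prod>b\<in>Basis. (1 / sqrt (2 * pi * t)) * exp (- ((x - m) \<bullet> b)\<^sup>2 / (2 * t)))"
    using t by (intro prod.cong) (auto simp: normal_density_def inner_diff_left)
  also have "\<dots> = (1 / sqrt (2 * pi * t)) ^ DIM('a) * exp (\<Sum>b\<in>Basis. - ((x - m) \<bullet> b)\<^sup>2 / (2 * t))"
    unfolding prod.distrib prod_constant by (simp add: exp_sum)
  also have "(\<Sum>b\<in>Basis. - ((x - m) \<bullet> b)\<^sup>2 / (2 * t)) = - (norm (x - m))\<^sup>2 / (2 * t)"
    by (simp add: sum_divide_distrib[symmetric] sum_negf power2_norm_eq_sum_Basis)
  also have "(1 / sqrt (2 * pi * t)) ^ DIM('a) = (2 * pi * t) powr (- real DIM('a) / 2)"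
    using t unfolding root by (simp add: powr_power)
  finally show ?thesis
    by (simp add: psi_def)
qed

lemma lborel_prod_Basis:
  fixes g :: "'a::euclidean_space \<Rightarrow> real \<Rightarrow> real"
  assumes [measurable]: "\<And>b. b \<in> Basis \<Longrightarrow> g b \<in> borel_measurable borel"
    and nonneg: "\<And>b s. b \<in> Basis \<Longrightarrow> 0 \<le> g b s"
    and int: "\<And>b. b \<in> Basis \<Longrightarrow> integrable lborel (g b)"
  shows "integrable lborel (\<lambda>x. \<Prod>b\<in>Basis. g b (x \<bullet> b))"
    and "(\<integral>x. (\<Prod>b\<in>Basis. g b (x \<bullet> b)) \<partial>lborel) = (\<Prod>b\<in>Basis. \<integral>s. g b s \<partial>lborel)"
proof -
  have "(\<integral>\<^sup>+x. ennreal (\<Prod>b\<in>Basis. g b (x \<bullet> b)) \<partial>lborel) = (\<integral>\<^sup>+x. (\<Prod>b\<in>Basis. ennreal (g b (x \<bullet> b))) \<partial>lborel)"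
    using nonneg by (intro nn_integral_cong) (simp add: prod_ennreal)
  also have "\<dots> = (\<Prod>b\<in>Basis. \<integral>\<^sup>+s. ennreal (g b s) \<partial>lborel)"
    by (rule nn_integral_lborel_prod) (auto simp: nonneg)
  also have "\<dots> = ennreal (\<Prod>b\<in>Basis. \<integral>s. g b s \<partial>lborel)"
    using nonneg int by (simp add: nn_integral_eq_integral prod_ennreal integral_nonneg_AE)
  finally have nn: "(\<integral>\<^sup>+x. ennreal (\<Prod>b\<in>Basis. g b (x \<bullet> b)) \<partial>lborel) = ennreal (\<Prod>b\<in>Basis. \<integral>s. g b s \<partial>lborel)" .
  show int_prod: "integrable lborel (\<lambda>x. \<Prod>b\<in>Basis. g b (x \<bullet> b))"
    using nn nonneg by (intro integrableI_nonneg) (auto simp: prod_nonneg)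
  have "ennreal (\<integral>x. (\<Prod>b\<in>Basis. g b (x \<bullet> b)) \<partial>lborel) = ennreal (\<Prod>b\<in>Basis. \<integral>s. g b s \<partial>lborel)"
    using nn int_prod nonneg by (subst nn_integral_eq_integral[symmetric]) (auto simp: prod_nonneg)
  then show "(\<integral>x. (\<Prod>b\<in>Basis. g b (x \<bullet> b)) \<partial>lborel) = (\<Prod>b\<in>Basis. \<integral>s. g b s \<partial>lborel)"
    using nonneg by (subst (asm) ennreal_inj) (auto intro!: prod_nonneg integral_nonneg_AE)
qed

lemma lborel_integral_affine:
  fixes f :: "'a::euclidean_space \<Rightarrow> real"
  assumes [measurable]: "f \<in> borel_measurable borel" and c: "c \<noteq> 0"
  shows "integrable lborel (\<lambda>x. f (a + c *\<^sub>R x)) \<longleftrightarrow> integrable lborel f"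
    and "(\<integral>x. f x \<partial>lborel) = \<bar>c\<bar> ^ DIM('a) * (\<integral>x. f (a + c *\<^sub>R x) \<partial>lborel)"
proof -
  have "(\<integral>\<^sup>+x. ennreal (norm (f x)) \<partial>lborel)
      = ennreal (\<bar>c\<bar> ^ DIM('a)) * (\<integral>\<^sup>+x. ennreal (norm (f (a + c *\<^sub>R x))) \<partial>lborel)"
    by (subst lborel_affine[OF c, of a]) (simp add: nn_integral_density nn_integral_distr nn_integral_cmult)
  moreover have "0 < \<bar>c\<bar> ^ DIM('a)" using c by simp
  ultimately show int_iff: "integrable lborel (\<lambda>x. f (a + c *\<^sub>R x)) \<longleftrightarrow> integrable lborel f"
    unfolding integrable_iff_bounded by (auto simp: ennreal_mult_less_top top_unique)
  show "(\<integral>x. f x \<partial>lborel) = \<bar>c\<bar> ^ DIM('a) * (\<integral>x. f (a + c *\<^sub>R x) \<partial>lborel)"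
  proof (cases "integrable lborel f")
    case True
    then show ?thesis
      using int_iff by (subst lborel_affine[OF c, of a]) (simp add: integral_density integral_distr)
  next
    case False
    with int_iff show ?thesis by (simp add: not_integrable_integral_eq)
  qed
qed

lemma lborel_integral_reflect:
  fixes f :: "'a::euclidean_space \<Rightarrow> real"
  assumes "f \<in> borel_measurable borel"
  shows "integrable lborel (\<lambda>x. f (a - x)) \<longleftrightarrow> integrable lborel f"
    and "(\<integral>x. f (a - x) \<partial>lborel) = (\<integral>x. f x \<partial>lborel)"
  using lborel_integral_affine[OF assms, of "-1" a] by simp_all

lemma
  fixes m :: "'a::euclidean_space"
  assumes t: "t > 0"
  shows integrable_psi: "integrable lborel (\<lambda>x. psi t (x - m))"
    and integral_psi: "(\<integral>x. psi t (x - m) \<partial>lborel) = 1"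
  using lborel_prod_Basis[of "\<lambda>b. normal_density (m \<bullet> b) (sqrt t)"] t
  by (simp_all add: psi_eq_prod_normal_density)

lemma
  fixes m :: "'a::euclidean_space"
  assumes t: "t > 0"
  shows integrable_psi': "integrable lborel (\<lambda>x. psi t (m - x))"
    and integral_psi': "(\<integral>x. psi t (m - x) \<partial>lborel) = 1"
proof -
  have "(\<lambda>x. psi t (m - x)) = (\<lambda>x. psi t (x - m))"
    by (rule ext) (rule psi_minus_commute)
  then show "integrable lborel (\<lambda>x. psi t (m - x))" "(\<integral>x. psi t (m - x) \<partial>lborel) = 1"
    using integrable_psi[OF t, of m] integral_psi[OF t, of m] by simp_all
qed

lemma nn_integral_psi: "t > 0 \<Longrightarrow> (\<integral>\<^sup>+x. ennreal (psi t (x - m)) \<partial>lborel) = 1"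
  using integrable_psi[of t m] integral_psi[of t m] psi_nonneg[of t]
  by (subst nn_integral_eq_integral) auto

lemma
  assumes t: "t > 0"
  shows integrable_psi_norm_power2: "integrable lborel (\<lambda>x. psi t x * (norm (x::'a::euclidean_space))\<^sup>2)"
    and integral_psi_norm_power2: "(\<integral>x. psi t x * (norm (x::'a))\<^sup>2 \<partial>lborel) = t * real DIM('a)"
proof -
  have "has_bochner_integral lborel (\<lambda>s. normal_density 0 (sqrt t) s * (s - 0) ^ (2 * 1))
      (fact (2 * 1) / ((2 / (sqrt t)\<^sup>2) ^ 1 * fact 1))"
    by (rule normal_moment_even) (use t in simp)
  moreover have "fact (2 * 1) / ((2 / (sqrt t)\<^sup>2) ^ 1 * fact 1) = t"
    using t by (simp add: fact_numeral)
  ultimately have moment: "has_bochner_integral lborel (\<lambda>s. normal_density 0 (sqrt t) s * s\<^sup>2) t"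
    by simp
  define g where "g c b s = normal_density 0 (sqrt t) s * (if b = c then s\<^sup>2 else 1)" for c b :: 'a and s
  have g_meas [measurable]: "g c b \<in> borel_measurable borel" for c b
    unfolding g_def by measurable
  have g_nonneg: "0 \<le> g c b s" for c b s
    unfolding g_def by simp
  have g_int: "integrable lborel (g c b)" and g_integral: "(\<integral>s. g c b s \<partial>lborel) = (if b = c then t else 1)" for c b
    using moment t integrable_normal_density[of 0 "sqrt t"] integral_normal_density[of 0 "sqrt t"]
    unfolding g_def by (cases "b = c"; auto simp: has_bochner_integral_iff)+
  have psi_prod: "psi t x * (x \<bullet> c)\<^sup>2 = (\<Prod>b\<in>Basis. g c b (x \<bullet> b))" if "c \<in> Basis" for c x
    using that psi_eq_prod_normal_density[OF t, of x 0]
    by (simp add: g_def prod.distrib prod.delta)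
  have eq: "psi t x * (norm x)\<^sup>2 = (\<Sum>c\<in>Basis. \<Prod>b\<in>Basis. g c b (x \<bullet> b))" for x :: 'a
    by (simp add: power2_norm_eq_sum_Basis sum_distrib_left psi_prod)
  note prod_Basis = lborel_prod_Basis[of "g c" for c, OF g_meas g_nonneg g_int]
  show "integrable lborel (\<lambda>x. psi t x * (norm (x::'a))\<^sup>2)"
    unfolding eq using prod_Basis(1) by simp
  have "(\<integral>x. psi t x * (norm (x::'a))\<^sup>2 \<partial>lborel) = (\<Sum>c\<in>(Basis::'a set). \<Prod>b\<in>Basis. if b = c then t else 1)"
    unfolding eq using prod_Basis by (simp add: g_integral)
  then show "(\<integral>x. psi t x * (norm (x::'a))\<^sup>2 \<partial>lborel) = t * real DIM('a)"
    by (simp add: prod.delta)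
qed

lemma le_one_plus_power2: "(a::real) \<le> 1 + a\<^sup>2"
  using zero_le_power2[of "a - 1/2"] by (simp add: power2_eq_square algebra_simps)

lemma
  fixes w :: "'a::euclidean_space"
  assumes t: "t > 0"
  shows integrable_psi_inner: "integrable lborel (\<lambda>x. psi t x * (x \<bullet> w))"
    and integral_psi_inner: "(\<integral>x. psi t x * (x \<bullet> w) \<partial>lborel) = 0"
proof -
  have "integrable lborel (\<lambda>x. norm w * (psi t x + psi t x * (norm x)\<^sup>2))"
    using integrable_psi[OF t, of 0] integrable_psi_norm_power2[OF t] by auto
  then show "integrable lborel (\<lambda>x. psi t x * (x \<bullet> w))"
  proof (rule Bochner_Integration.integrable_bound)
    show "AE x in lborel. norm (psi t x * (x \<bullet> w)) \<le> norm (norm w * (psi t x + psi t x * (norm x)\<^sup>2))"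
    proof (intro AE_I2)
      fix x :: 'a
      have "norm w * norm x \<le> norm w * (1 + (norm x)\<^sup>2)"
        by (rule mult_left_mono) (simp_all add: le_one_plus_power2)
      then have "\<bar>x \<bullet> w\<bar> \<le> norm w * (1 + (norm x)\<^sup>2)"
        using Cauchy_Schwarz_ineq2[of x w] by (metis mult.commute order_trans)
      then have "psi t x * \<bar>x \<bullet> w\<bar> \<le> psi t x * (norm w * (1 + (norm x)\<^sup>2))"
        using psi_nonneg[OF t] by (intro mult_left_mono) auto
      then show "norm (psi t x * (x \<bullet> w)) \<le> norm (norm w * (psi t x + psi t x * (norm x)\<^sup>2))"
        using psi_nonneg[OF t, of x] by (simp add: abs_mult algebra_simps)
    qed
  qed simp
  have "(\<integral>x. psi t (0 - x) * ((0 - x) \<bullet> w) \<partial>lborel) = (\<integral>x. psi t x * (x \<bullet> w) \<partial>lborel)"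
    by (rule lborel_integral_reflect) measurable
  then show "(\<integral>x. psi t x * (x \<bullet> w) \<partial>lborel) = 0"
    by (simp add: psi_minus)
qed
lemma
  fixes w v :: "'a::euclidean_space"
  assumes t: "t > 0"
  shows integrable_psi_quadratic: "integrable lborel (\<lambda>y. psi t y * (a + w \<bullet> (v - y) + b * (norm (v - y))\<^sup>2))"
    and conv_psi_quadratic: "conv (psi t) (\<lambda>y. a + w \<bullet> y + b * (norm y)\<^sup>2) v
         = a + w \<bullet> v + b * (norm v)\<^sup>2 + b * t * real DIM('a)"
proof -
  define c where "c = a + w \<bullet> v + b * (norm v)\<^sup>2"
  define w' where "w' = w + (2 * b) *\<^sub>R v"
  have expand: "psi t y * (a + w \<bullet> (v - y) + b * (norm (v - y))\<^sup>2)
      = c * psi t y - psi t y * (y \<bullet> w') + b * (psi t y * (norm y)\<^sup>2)" for y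
    unfolding c_def w'_def power2_norm_eq_inner
    by (simp add: algebra_simps inner_diff_left inner_diff_right inner_add_right inner_commute)
  have ints: "integrable lborel (psi t :: 'a \<Rightarrow> real)" "integrable lborel (\<lambda>y. psi t y * (y \<bullet> w'))"
    "integrable lborel (\<lambda>y. psi t y * (norm (y::'a))\<^sup>2)"
    using integrable_psi[OF t, of 0] integrable_psi_inner[OF t, of w'] integrable_psi_norm_power2[OF t] by simp_all
  show "integrable lborel (\<lambda>y. psi t y * (a + w \<bullet> (v - y) + b * (norm (v - y))\<^sup>2))"
    unfolding expand using ints by auto
  have "conv (psi t) (\<lambda>y. a + w \<bullet> y + b * (norm y)\<^sup>2) v
      = (\<integral>y. c * psi t y - psi t y * (y \<bullet> w') \<partial>lborel) + (\<integral>y. b * (psi t y * (norm (y::'a))\<^sup>2) \<partial>lborel)"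
    unfolding conv_def expand by (intro Bochner_Integration.integral_add) (use ints in auto)
  also have "(\<integral>y. c * psi t y - psi t y * (y \<bullet> w') \<partial>lborel)
      = c * (\<integral>y. psi t (y::'a) \<partial>lborel) - (\<integral>y. psi t y * (y \<bullet> w') \<partial>lborel)"
    using ints by (subst Bochner_Integration.integral_diff) auto
  finally have "conv (psi t) (\<lambda>y. a + w \<bullet> y + b * (norm y)\<^sup>2) v
      = c * (\<integral>y. psi t (y::'a) \<partial>lborel) - (\<integral>y. psi t y * (y \<bullet> w') \<partial>lborel)
        + b * (\<integral>y. psi t y * (norm (y::'a))\<^sup>2 \<partial>lborel)"
    by simp
  then show "conv (psi t) (\<lambda>y. a + w \<bullet> y + b * (norm y)\<^sup>2) v = a + w \<bullet> v + b * (norm v)\<^sup>2 + b * t * real DIM('a)"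
    using integral_psi[OF t, of "0::'a"] integral_psi_inner[OF t, of w'] integral_psi_norm_power2[OF t, where 'a='a]
    by (simp add: c_def)
qed

lemma nn_integral_normal_density_mult:
  assumes s: "s > 0" and t: "t > 0"
  shows "(\<integral>\<^sup>+r. ennreal (normal_density a (sqrt s) r * normal_density c (sqrt t) r) \<partial>lborel)
     = ennreal (normal_density c (sqrt (s + t)) a)"
proof -
  have shift: "normal_density a (sqrt s) (c + y) = normal_density 0 (sqrt s) ((a - c) - y)"
    and centre: "normal_density c (sqrt t) (c + y) = normal_density 0 (sqrt t) y" for y
    by (simp_all add: normal_density_def power2_commute algebra_simps)
  have "(\<integral>\<^sup>+r. ennreal (normal_density a (sqrt s) r * normal_density c (sqrt t) r) \<partial>lborel)
     = (\<integral>\<^sup>+y. ennreal (normal_density 0 (sqrt s) ((a - c) - y) * normal_density 0 (sqrt t) y) \<partial>lborel)"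
    using nn_integral_real_affine[of "\<lambda>r. ennreal (normal_density a (sqrt s) r * normal_density c (sqrt t) r)" 1 c]
    by (simp add: shift centre)
  also have "\<dots> = normal_density 0 (sqrt ((sqrt s)\<^sup>2 + (sqrt t)\<^sup>2)) (a - c)"
    using conv_normal_density_zero_mean[of "sqrt s" "sqrt t"] s t by (auto dest: fun_cong[of _ _ "a - c"])
  also have "\<dots> = normal_density c (sqrt (s + t)) a"
    using s t by (simp add: normal_density_def)
  finally show ?thesis .
qed

lemma
  fixes x w :: "'a::euclidean_space"
  assumes s: "s > 0" and t: "t > 0"
  shows integrable_psi_mult_psi: "integrable lborel (\<lambda>y. psi s (x - y) * psi t (y - w))"
    and integral_psi_mult_psi: "(\<integral>y. psi s (x - y) * psi t (y - w) \<partial>lborel) = psi (s + t) (x - w)"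
proof -
  define g where "g b r = normal_density (x \<bullet> b) (sqrt s) r * normal_density (w \<bullet> b) (sqrt t) r" for b :: 'a and r
  have g_meas [measurable]: "g b \<in> borel_measurable borel" for b
    unfolding g_def by measurable
  have g_nonneg: "0 \<le> g b r" for b r
    unfolding g_def by simp
  have g_nn: "(\<integral>\<^sup>+r. ennreal (g b r) \<partial>lborel) = ennreal (normal_density (w \<bullet> b) (sqrt (s + t)) (x \<bullet> b))" for b
    unfolding g_def by (rule nn_integral_normal_density_mult[OF s t])
  have g_int: "integrable lborel (g b)" for b
    using g_nn[of b] g_nonneg by (intro integrableI_nonneg) auto
  have g_integral: "(\<integral>r. g b r \<partial>lborel) = normal_density (w \<bullet> b) (sqrt (s + t)) (x \<bullet> b)" for b
    using g_nn[of b] g_int[of b] g_nonneg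
    by (subst (asm) nn_integral_eq_integral) (auto intro: integral_nonneg_AE)
  have eq: "psi s (x - y) * psi t (y - w) = (\<Prod>b\<in>Basis. g b (y \<bullet> b))" for y
    unfolding psi_minus_commute[of s x y]
    unfolding g_def prod.distrib psi_eq_prod_normal_density[OF s] psi_eq_prod_normal_density[OF t] ..
  note prod_Basis = lborel_prod_Basis[of g, OF g_meas g_nonneg g_int]
  show "integrable lborel (\<lambda>y. psi s (x - y) * psi t (y - w))"
    unfolding eq by (rule prod_Basis(1))
  show "(\<integral>y. psi s (x - y) * psi t (y - w) \<partial>lborel) = psi (s + t) (x - w)"
    unfolding eq prod_Basis(2) g_integral using psi_eq_prod_normal_density[of "s + t" x w] s t by simp
qed

lemma psi_scale:
  assumes t: "t > 0"
  shows "sqrt t ^ DIM('a) * psi t (sqrt t *\<^sub>R x) = psi 1 (x::'a::euclidean_space)"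
proof -
  have "sqrt t ^ DIM('a) = t powr (real DIM('a) / 2)"
    using t by (simp add: sqrt_def root_powr_inverse powr_realpow[symmetric] powr_powr)
  moreover have "(2 * pi * t) powr (- real DIM('a) / 2) = (2 * pi) powr (- real DIM('a) / 2) * t powr (- real DIM('a) / 2)"
    using t by (simp add: powr_mult)
  moreover have "t powr (real DIM('a) / 2) * t powr (- real DIM('a) / 2) = 1"
    using t by (simp add: powr_add[symmetric])
  ultimately have "sqrt t ^ DIM('a) * (2 * pi * t) powr (- real DIM('a) / 2) = (2 * pi) powr (- real DIM('a) / 2)"
    by (metis (no_types, lifting) mult.assoc mult.left_commute mult_1_right)
  then show ?thesis
    using t unfolding psi_def by (simp add: mult.assoc[symmetric] power_mult_distrib)
qed

section \<open>Convolution with the Gaussian kernel\<close>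

lemma integral_dominated_convergence_at:
  fixes s :: "'c::first_countable_topology \<Rightarrow> 'a \<Rightarrow> 'b::{banach, second_countable_topology}"
    and w :: "'a \<Rightarrow> real"
  assumes "f \<in> borel_measurable M" "\<And>z. s z \<in> borel_measurable M" "integrable M w"
    and lim: "\<And>x. x \<in> space M \<Longrightarrow> ((\<lambda>z. s z x) \<longlongrightarrow> f x) (at z0 within S)"
    and bound: "eventually (\<lambda>z. AE x in M. norm (s z x) \<le> w x) (at z0 within S)"
  shows "((\<lambda>z. integral\<^sup>L M (s z)) \<longlongrightarrow> integral\<^sup>L M f) (at z0 within S)"
proof (subst tendsto_at_iff_sequentially, intro allI impI)
  fix X :: "nat \<Rightarrow> 'c" assume XS: "\<forall>i. X i \<in> S - {z0}" and X: "X \<longlonglongrightarrow> z0"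
  have FX: "filterlim X (at z0 within S) sequentially"
    using XS X by (auto simp: filterlim_at)
  from filterlim_iff[THEN iffD1, OF FX, rule_format, OF bound]
  obtain N where N: "\<And>n. N \<le> n \<Longrightarrow> AE x in M. norm (s (X n) x) \<le> w x"
    by (auto simp: eventually_sequentially)
  show "((\<lambda>z. integral\<^sup>L M (s z)) \<circ> X) \<longlonglongrightarrow> integral\<^sup>L M f"
    unfolding comp_def
  proof (rule LIMSEQ_offset[where k=N], rule integral_dominated_convergence)
    show "AE x in M. norm (s (X (n + N)) x) \<le> w x" for n
      by (rule N) auto
    have "filterlim (\<lambda>n. X (n + N)) (at z0 within S) sequentially"
      using FX by (rule filterlim_compose[OF _ filterlim_add_const_nat_at_top])
    then show "AE x in M. (\<lambda>n. s (X (n + N)) x) \<longlonglongrightarrow> f x"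
      using lim by (intro AE_I2) (rule filterlim_compose[of "\<lambda>z. s z x" for x, rotated])
  qed (use assms in auto)
qed

lemma conv_psi_commute:
  fixes g :: "'a::euclidean_space \<Rightarrow> real"
  assumes [measurable]: "g \<in> borel_measurable borel"
  shows "integrable lborel (\<lambda>y. psi t y * g (v - y)) \<longleftrightarrow> integrable lborel (\<lambda>y. g y * psi t (v - y))"
    and "conv (psi t) g v = conv g (psi t) v"
  using lborel_integral_reflect[of "\<lambda>y. g y * psi t (v - y)" v]
  by (simp_all add: conv_def mult.commute)

lemma abs_mult_psi_le:
  "t > 0 \<Longrightarrow> \<bar>c * psi t x\<bar> \<le> (2 * pi * t) powr (- real DIM('a) / 2) * \<bar>c\<bar>"
  for x :: "'a::euclidean_space"
  using psi_le[of t x] psi_nonneg[of t x] by (simp add: abs_mult mult.commute mult_left_mono)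

context
  fixes f :: "'a::euclidean_space \<Rightarrow> real"
  assumes f_int: "integrable lborel f"
begin

lemma integrable_conv_psi:
  assumes t: "t > 0"
  shows "integrable lborel (\<lambda>y. f y * psi t (v - y))"
proof -
  have [measurable]: "f \<in> borel_measurable borel"
    using f_int by auto
  have "integrable lborel (\<lambda>y. (2 * pi * t) powr (- real DIM('a) / 2) * \<bar>f y\<bar>)"
    using f_int by auto
  then show ?thesis
  proof (rule Bochner_Integration.integrable_bound)
    show "AE y in lborel. norm (f y * psi t (v - y)) \<le> norm ((2 * pi * t) powr (- real DIM('a) / 2) * \<bar>f y\<bar>)"
      unfolding real_norm_def by (intro AE_I2 order_trans[OF abs_mult_psi_le[OF t] abs_ge_self])
  qed measurable
qed

lemma continuous_on_conv_psi:
  assumes t: "t > 0"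
  shows "continuous_on UNIV (conv f (psi t))"
  unfolding continuous_on_def
proof (intro ballI)
  fix v :: 'a
  have [measurable]: "f \<in> borel_measurable borel"
    using f_int by auto
  show "(conv f (psi t) \<longlongrightarrow> conv f (psi t) v) (at v within UNIV)"
    unfolding conv_def
  proof (rule integral_dominated_convergence_at[where w="\<lambda>y. (2 * pi * t) powr (- real DIM('a) / 2) * \<bar>f y\<bar>"])
    show "integrable lborel (\<lambda>y. (2 * pi * t) powr (- real DIM('a) / 2) * \<bar>f y\<bar>)"
      using f_int by auto
    show "((\<lambda>z. f y * psi t (z - y)) \<longlongrightarrow> f y * psi t (v - y)) (at v within UNIV)" for y
      by (intro tendsto_intros continuous_on_tendsto_compose[OF continuous_on_psi[of UNIV t]]) auto
    show "eventually (\<lambda>z. AE y in lborel. norm (f y * psi t (z - y)) \<le> (2 * pi * t) powr (- real DIM('a) / 2) * \<bar>f y\<bar>)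
        (at v within UNIV)"
      unfolding real_norm_def by (intro always_eventually allI AE_I2 abs_mult_psi_le[OF t])
  qed measurable
qed

context
  assumes f_nonneg: "\<And>y. f y \<ge> 0"
begin

lemma conv_psi_nonneg: "t > 0 \<Longrightarrow> conv f (psi t) v \<ge> 0"
  unfolding conv_def by (intro integral_nonneg_AE) (auto intro!: mult_nonneg_nonneg f_nonneg psi_nonneg)

lemma conv_psi_le:
  assumes t: "t > 0"
  shows "conv f (psi t) v \<le> (\<integral>y. f y \<partial>lborel) * (2 * pi * t) powr (- real DIM('a) / 2)"
proof -
  have "conv f (psi t) v \<le> (\<integral>y. f y * (2 * pi * t) powr (- real DIM('a) / 2) \<partial>lborel)"
    unfolding conv_def using integrable_conv_psi[OF t] f_int psi_le[OF t] f_nonneg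
    by (intro integral_mono) (auto intro: mult_left_mono)
  then show ?thesis
    by simp
qed

lemma conv_psi_pos:
  assumes t: "t > 0" and nonzero: "\<not> (AE v in lborel. f v = 0)"
  shows "conv f (psi t) v > 0"
proof -
  have "conv f (psi t) v \<noteq> 0"
  proof
    assume "conv f (psi t) v = 0"
    then have "AE y in lborel. f y * psi t (v - y) = 0"
      unfolding conv_def using integrable_conv_psi[OF t]
      by (subst (asm) integral_nonneg_eq_0_iff_AE) (auto intro!: mult_nonneg_nonneg f_nonneg psi_nonneg[OF t])
    then have "AE y in lborel. f y = 0"
      by (rule eventually_mono) (metis mult_eq_0_iff psi_pos[OF t] less_irrefl)
    with nonzero show False
      by simp
  qed
  with conv_psi_nonneg[OF t, of v] show ?thesis
    by linarith
qed

lemma exists_cball_integral_pos: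
  assumes nonzero: "\<not> (AE v in lborel. f v = 0)"
  obtains R where "(\<integral>y. f y * indicator (cball 0 R) y \<partial>lborel) > 0"
proof -
  have [measurable]: "f \<in> borel_measurable borel"
    using f_int by auto
  have "\<not> (\<forall>n::nat. AE y in lborel. f y * indicator (cball 0 (real n)) y = 0)"
  proof
    assume "\<forall>n::nat. AE y in lborel. f y * indicator (cball 0 (real n)) y = 0"
    then have "AE y in lborel. \<forall>n::nat. f y * indicator (cball 0 (real n)) y = 0"
      by (simp only: AE_all_countable) blast
    then have "AE y in lborel. f y = 0"
    proof eventually_elim
      case (elim y)
      obtain n :: nat where "norm y \<le> real n"
        using real_arch_simple by blast
      with elim[rule_format, of n] show ?case
        by simp
    qed
    with nonzero show False
      by simp
  qed
  then obtain n :: nat where "\<not> (AE y in lborel. f y * indicator (cball 0 (real n)) y = 0)"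
    by blast
  moreover have "integrable lborel (\<lambda>y. f y * indicator (cball 0 (real n)) y)"
    using integrable_mult_indicator[of "cball 0 (real n)" lborel f] f_int by (simp add: mult.commute)
  ultimately have "(\<integral>y. f y * indicator (cball 0 (real n)) y \<partial>lborel) \<noteq> 0"
    by (subst integral_nonneg_eq_0_iff_AE) (auto simp: f_nonneg)
  moreover have "(\<integral>y. f y * indicator (cball 0 (real n)) y \<partial>lborel) \<ge> 0"
    by (intro integral_nonneg_AE) (simp add: f_nonneg)
  ultimately show ?thesis
    using that[of "real n"] by linarith
qed

lemma conv_psi_ge_gaussian:
  assumes t: "t > 0" and nonzero: "\<not> (AE v in lborel. f v = 0)"
  obtains c where "c > 0" and "\<And>v. c * exp (- (norm v)\<^sup>2 / t) \<le> conv f (psi t) v"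
proof -
  have [measurable]: "f \<in> borel_measurable borel"
    using f_int by auto
  obtain R where R: "(\<integral>y. f y * indicator (cball 0 R) y \<partial>lborel) > 0"
    using exists_cball_integral_pos[OF nonzero] .
  define a where "a = (\<integral>y. f y * indicator (cball 0 R) y \<partial>lborel)"
  define C where "C = (2 * pi * t) powr (- real DIM('a) / 2) * exp (- R\<^sup>2 / t)"
  have psi_ge: "C * exp (- (norm v)\<^sup>2 / t) \<le> psi t (v - y)" if "norm y \<le> R" for v y :: 'a
  proof -
    have "norm (v - y) \<le> norm v + R"
      using norm_triangle_ineq4[of v y] that by linarith
    then have "(norm (v - y))\<^sup>2 \<le> (norm v + R)\<^sup>2"
      by (intro power_mono) auto
    also have "\<dots> \<le> 2 * (norm v)\<^sup>2 + 2 * R\<^sup>2"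
      using zero_le_power2[of "norm v - R"] by (simp add: power2_eq_square algebra_simps)
    finally have "(norm (v - y))\<^sup>2 / (2 * t) \<le> (2 * (norm v)\<^sup>2 + 2 * R\<^sup>2) / (2 * t)"
      using t by (intro divide_right_mono) auto
    also have "\<dots> = R\<^sup>2 / t + (norm v)\<^sup>2 / t"
      using t by (simp add: field_simps)
    finally have "exp (- (R\<^sup>2 / t + (norm v)\<^sup>2 / t)) \<le> exp (- ((norm (v - y))\<^sup>2 / (2 * t)))"
      by simp
    then show ?thesis
      unfolding C_def psi_def by (simp add: mult.assoc exp_add[symmetric] mult_left_mono)
  qed
  show ?thesis
  proof (rule that)
    show "a * C > 0"
      using R t by (simp add: a_def C_def)
    fix v :: 'a
    have "(\<integral>y. f y * indicator (cball 0 R) y * (C * exp (- (norm v)\<^sup>2 / t)) \<partial>lborel) \<le> conv f (psi t) v"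
      unfolding conv_def
    proof (rule integral_mono)
      show "integrable lborel (\<lambda>y. f y * indicator (cball 0 R) y * (C * exp (- (norm v)\<^sup>2 / t)))"
        using integrable_mult_indicator[of "cball 0 R" lborel f] f_int by (simp add: mult.commute)
      show "f y * indicator (cball 0 R) y * (C * exp (- (norm v)\<^sup>2 / t)) \<le> f y * psi t (v - y)" for y
        using psi_ge[of y v] f_nonneg[of y] psi_nonneg[OF t, of "v - y"]
        by (cases "y \<in> cball 0 R") (simp_all add: mult_left_mono)
    qed (rule integrable_conv_psi[OF t])
    then show "a * C * exp (- (norm v)\<^sup>2 / t) \<le> conv f (psi t) v"
      by (subst (asm) integral_mult_left_zero) (simp add: a_def mult.assoc)
  qed
qed

lemma nn_integral_conv_psi_mult:
  assumes t: "t > 0" and [measurable]: "\<phi> \<in> borel_measurable borel" and \<phi>_nonneg: "\<And>v. \<phi> v \<ge> 0"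
  shows "(\<integral>\<^sup>+v. ennreal (conv f (psi t) v * \<phi> v) \<partial>lborel)
       = (\<integral>\<^sup>+y. ennreal (f y) * (\<integral>\<^sup>+v. ennreal (psi t (v - y) * \<phi> v) \<partial>lborel) \<partial>lborel)"
proof -
  have [measurable]: "f \<in> borel_measurable borel"
    using f_int by auto
  have "ennreal (conv f (psi t) v) = (\<integral>\<^sup>+y. ennreal (f y * psi t (v - y)) \<partial>lborel)" for v
    unfolding conv_def using integrable_conv_psi[OF t, of v]
    by (intro nn_integral_eq_integral[symmetric]) (auto intro!: mult_nonneg_nonneg f_nonneg psi_nonneg[OF t])
  moreover have "ennreal (f y * psi t (v - y)) * ennreal (\<phi> v) = ennreal (f y * psi t (v - y) * \<phi> v)" for v y
    using f_nonneg[of y] psi_nonneg[OF t, of "v - y"] \<phi>_nonneg[of v] by (simp add: ennreal_mult)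
  ultimately have "ennreal (conv f (psi t) v * \<phi> v) = (\<integral>\<^sup>+y. ennreal (f y * psi t (v - y) * \<phi> v) \<partial>lborel)" for v
    using conv_psi_nonneg[OF t, of v] \<phi>_nonneg[of v] by (simp add: ennreal_mult nn_integral_multc[symmetric])
  then have "(\<integral>\<^sup>+v. ennreal (conv f (psi t) v * \<phi> v) \<partial>lborel)
      = (\<integral>\<^sup>+v. (\<integral>\<^sup>+y. ennreal (f y * psi t (v - y) * \<phi> v) \<partial>lborel) \<partial>lborel)"
    by simp
  also have "\<dots> = (\<integral>\<^sup>+y. (\<integral>\<^sup>+v. ennreal (f y * psi t (v - y) * \<phi> v) \<partial>lborel) \<partial>lborel)"
    by (rule lborel_pair.Fubini') measurable
  also have "\<dots> = (\<integral>\<^sup>+y. ennreal (f y) * (\<integral>\<^sup>+v. ennreal (psi t (v - y) * \<phi> v) \<partial>lborel) \<partial>lborel)"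
    using f_nonneg by (simp add: ennreal_mult' mult.assoc nn_integral_cmult[symmetric])
  finally show ?thesis .
qed

lemma nn_integral_conv_psi:
  assumes t: "t > 0"
  shows "(\<integral>\<^sup>+v. ennreal (conv f (psi t) v) \<partial>lborel) = ennreal (\<integral>y. f y \<partial>lborel)"
proof -
  have "(\<integral>\<^sup>+v. ennreal (conv f (psi t) v * 1) \<partial>lborel)
       = (\<integral>\<^sup>+y. ennreal (f y) * (\<integral>\<^sup>+v. ennreal (psi t (v - y) * 1) \<partial>lborel) \<partial>lborel)"
    by (rule nn_integral_conv_psi_mult[OF t]) auto
  then show ?thesis
    using f_int f_nonneg by (simp add: nn_integral_psi[OF t] nn_integral_eq_integral)
qed

lemma integrable_conv_psi_fun:
  assumes t: "t > 0"
  shows "integrable lborel (conv f (psi t))"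
proof (rule integrableI_nonneg)
  show "conv f (psi t) \<in> borel_measurable lborel"
    using borel_measurable_continuous_onI[OF continuous_on_conv_psi[OF t]] by simp
  show "AE x in lborel. 0 \<le> conv f (psi t) x"
    by (intro AE_I2 conv_psi_nonneg[OF t])
  show "(\<integral>\<^sup>+x. ennreal (conv f (psi t) x) \<partial>lborel) < \<infinity>"
    using nn_integral_conv_psi[OF t] by simp
qed

end

end

section \<open>Backward uniqueness for the heat flow\<close>

lemma mult_exp_le:
  fixes r a :: real
  assumes "r \<ge> 0" "a > 0"
  shows "r * exp (- a * r) \<le> (2 / a) * exp (- (a / 2) * r)"
proof -
  have "r \<le> (2 / a) * exp (a * r / 2)"
    using exp_ge_add_one_self[of "a * r / 2"] assms by (simp add: field_simps)
  then have "r * exp (- a * r) \<le> (2 / a) * exp (a * r / 2) * exp (- a * r)"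
    by (intro mult_right_mono) auto
  also have "\<dots> = (2 / a) * exp (- (a / 2) * r)"
    by (simp add: mult.assoc exp_add[symmetric])
  finally show ?thesis .
qed

lemma norm_exp_diff_quotient_le:
  fixes z z0 :: complex and r a :: real
  assumes r: "r \<ge> 0" and a: "a > 0" "Re z0 > 2 * a" and z: "z \<in> ball z0 a" "z \<noteq> z0"
  shows "norm ((exp (- z * of_real r) - exp (- z0 * of_real r)) / (z - z0)) \<le> r * exp (- a * r)"
proof -
  have "norm (exp (- z * of_real r) - exp (- z0 * of_real r)) \<le> (r * exp (- a * r)) * norm (z - z0)"
  proof (rule field_differentiable_bound[of "ball z0 a" "\<lambda>w. exp (- w * of_real r)" "\<lambda>w. - of_real r * exp (- w * of_real r)"])
    show "((\<lambda>w. exp (- w * of_real r)) has_field_derivative - of_real r * exp (- w * of_real r)) (at w within ball z0 a)" for w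
      by (auto intro!: derivative_eq_intros)
    show "norm (- of_real r * exp (- w * of_real r)) \<le> r * exp (- a * r)" if w: "w \<in> ball z0 a" for w
    proof -
      have "\<bar>Re z0 - Re w\<bar> < a"
        using w abs_Re_le_cmod[of "z0 - w"] by (simp add: dist_norm)
      then have "Re w \<ge> a"
        using a by linarith
      have "norm (- of_real r * exp (- w * of_real r)) = r * exp (- Re w * r)"
        using r by (simp add: norm_mult)
      also have "\<dots> \<le> r * exp (- a * r)"
        using r \<open>Re w \<ge> a\<close> by (intro mult_left_mono) (auto intro: mult_right_mono)
      finally show ?thesis .
    qed
  qed (use z a in auto)
  then show ?thesis
    using z by (simp add: norm_divide divide_le_eq)
qed

context
  fixes K r :: "'a::euclidean_space \<Rightarrow> real"
  assumes K_meas [measurable]: "K \<in> borel_measurable borel"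
    and r_meas [measurable]: "r \<in> borel_measurable borel"
    and r_nonneg: "\<And>y. r y \<ge> 0"
    and K_int: "\<And>c. c > 0 \<Longrightarrow> integrable lborel (\<lambda>y. K y * exp (- c * r y))"
begin

lemma integrable_laplace_complex:
  assumes "Re z > 0"
  shows "integrable lborel (\<lambda>y. of_real (K y) * exp (- z * of_real (r y)))"
proof (rule Bochner_Integration.integrable_bound[OF K_int[OF assms]])
  show "AE y in lborel. norm (of_real (K y) * exp (- z * of_real (r y))) \<le> norm (K y * exp (- Re z * r y))"
    by (intro AE_I2) (simp add: norm_mult abs_mult norm_exp_eq_Re)
qed measurable

lemma integrable_laplace_moment:
  assumes a: "a > 0"
  shows "integrable lborel (\<lambda>y. \<bar>K y\<bar> * (r y * exp (- a * r y)))"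
proof -
  have "integrable lborel (\<lambda>y. (2 / a) * \<bar>K y * exp (- (a / 2) * r y)\<bar>)"
    using K_int[of "a / 2"] a by auto
  then show ?thesis
  proof (rule Bochner_Integration.integrable_bound)
    show "AE y in lborel. norm (\<bar>K y\<bar> * (r y * exp (- a * r y))) \<le> norm ((2 / a) * \<bar>K y * exp (- (a / 2) * r y)\<bar>)"
    proof (rule AE_I2)
      fix y
      have "\<bar>K y\<bar> * (r y * exp (- a * r y)) \<le> \<bar>K y\<bar> * ((2 / a) * exp (- (a / 2) * r y))"
        using mult_exp_le[OF r_nonneg a] by (intro mult_left_mono) auto
      then show "norm (\<bar>K y\<bar> * (r y * exp (- a * r y))) \<le> norm ((2 / a) * \<bar>K y * exp (- (a / 2) * r y)\<bar>)"
        using r_nonneg[of y] a by (simp add: abs_mult mult_ac)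
    qed
  qed measurable
qed

lemma has_field_derivative_laplace:
  defines "\<Phi> \<equiv> \<lambda>z. \<integral>y. of_real (K y) * exp (- z * of_real (r y)) \<partial>lborel"
  assumes z0: "Re z0 > 0"
  shows "(\<Phi> has_field_derivative (\<integral>y. of_real (K y) * (- of_real (r y) * exp (- z0 * of_real (r y))) \<partial>lborel)) (at z0)"
proof -
  define a where "a = Re z0 / 3"
  have a: "a > 0" "Re z0 > 2 * a"
    using z0 by (auto simp: a_def)
  define Q where "Q z y = of_real (K y) * ((exp (- z * of_real (r y)) - exp (- z0 * of_real (r y))) / (z - z0))" for z y
  define D where "D y = of_real (K y) * (- of_real (r y) * exp (- z0 * of_real (r y)))" for y
  have "eventually (\<lambda>z. z \<in> ball z0 a) (at z0)"
    using a(1) by (intro eventually_at_in_open') auto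
  moreover have "eventually (\<lambda>z. z \<noteq> z0) (at z0)"
    by (simp add: eventually_at_filter)
  ultimately have near: "eventually (\<lambda>z. z \<in> ball z0 a \<and> z \<noteq> z0) (at z0)"
    by (rule eventually_conj)
  have Re_pos: "Re z > 0" if "z \<in> ball z0 a" for z
    using that a abs_Re_le_cmod[of "z0 - z"] by (simp add: dist_norm)
  have "((\<lambda>z. \<integral>y. Q z y \<partial>lborel) \<longlongrightarrow> (\<integral>y. D y \<partial>lborel)) (at z0)"
  proof (rule integral_dominated_convergence_at[where w="\<lambda>y. \<bar>K y\<bar> * (r y * exp (- a * r y))"])
    show "integrable lborel (\<lambda>y. \<bar>K y\<bar> * (r y * exp (- a * r y)))"
      by (rule integrable_laplace_moment[OF a(1)])
    show "((\<lambda>z. Q z y) \<longlongrightarrow> D y) (at z0)" for y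
    proof -
      have "((\<lambda>w. exp (- w * of_real (r y))) has_field_derivative - of_real (r y) * exp (- z0 * of_real (r y))) (at z0)"
        by (auto intro!: derivative_eq_intros)
      then show ?thesis
        unfolding Q_def D_def by (intro tendsto_mult_left) (simp add: has_field_derivative_iff)
    qed
    show "eventually (\<lambda>z. AE y in lborel. norm (Q z y) \<le> \<bar>K y\<bar> * (r y * exp (- a * r y))) (at z0)"
      using near
    proof eventually_elim
      case (elim z)
      have "norm (Q z y) \<le> \<bar>K y\<bar> * (r y * exp (- a * r y))" for y
        unfolding Q_def norm_mult using norm_exp_diff_quotient_le[OF r_nonneg a conjunct1[OF elim] conjunct2[OF elim]]
        by (simp add: mult_left_mono)
      then show ?case
        by simp
    qed
  qed (simp_all add: Q_def D_def)
  moreover have "eventually (\<lambda>z. (\<integral>y. Q z y \<partial>lborel) = (\<Phi> z - \<Phi> z0) / (z - z0)) (at z0)"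
    using near
  proof eventually_elim
    case (elim z)
    have "(\<integral>y. Q z y \<partial>lborel) = (\<integral>y. of_real (K y) * exp (- z * of_real (r y)) - of_real (K y) * exp (- z0 * of_real (r y)) \<partial>lborel) / (z - z0)"
      unfolding Q_def by (simp add: right_diff_distrib)
    then show ?case
      unfolding \<Phi>_def using integrable_laplace_complex[OF Re_pos] integrable_laplace_complex[OF z0] elim
      by simp
  qed
  ultimately show ?thesis
    unfolding D_def by (simp add: has_field_derivative_iff tendsto_cong)
qed

lemma laplace_eq_0:
  assumes ab: "0 < a" "a < b"
    and zero: "\<And>c. a < c \<Longrightarrow> c < b \<Longrightarrow> (\<integral>y. K y * exp (- c * r y) \<partial>lborel) = 0"
    and c: "c > 0"
  shows "(\<integral>y. K y * exp (- c * r y) \<partial>lborel) = 0"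
proof -
  define \<Phi> :: "complex \<Rightarrow> complex" where "\<Phi> = (\<lambda>z. \<integral>y. of_real (K y) * exp (- z * of_real (r y)) \<partial>lborel)"
  have \<Phi>_real: "\<Phi> (of_real x) = of_real (\<integral>y. K y * exp (- x * r y) \<partial>lborel)" for x
  proof -
    have "\<Phi> (of_real x) = (\<integral>y. complex_of_real (K y * exp (- x * r y)) \<partial>lborel)"
      unfolding \<Phi>_def by (intro Bochner_Integration.integral_cong) (auto simp: exp_of_real[symmetric])
    then show ?thesis
      by (simp only: integral_complex_of_real)
  qed
  have "\<Phi> field_differentiable at z" if "Re z > 0" for z
    unfolding field_differentiable_def \<Phi>_def using has_field_derivative_laplace[OF that] by (rule exI)
  then have holo: "\<Phi> holomorphic_on {z. Re z > 0}"
    unfolding holomorphic_on_def by (auto intro: field_differentiable_at_within)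
  have "eventually (\<lambda>x. x \<noteq> a) (at a)"
    by (simp add: eventually_at_filter)
  then have "eventually (\<lambda>x. complex_of_real x \<noteq> of_real a) (at a)"
    by (rule eventually_mono) simp
  then have limpt: "of_real a islimpt (of_real ` {a<..<b} :: complex set)"
    by (intro islimpt_isCont_image islimpt_greaterThanLessThan1 ab) auto
  have "\<Phi> (of_real c) = 0"
  proof (rule analytic_continuation[OF holo _ _ _ _ limpt])
    show "open {z. 0 < Re z}"
      by (rule open_halfspace_Re_gt)
    show "connected {z. 0 < Re z}"
      by (intro convex_connected convex_halfspace_Re_gt)
    show "of_real ` {a<..<b} \<subseteq> {z. 0 < Re z}" "of_real a \<in> {z. 0 < Re z}" "of_real c \<in> {z. 0 < Re z}"
      using ab c by auto
    show "\<Phi> z = 0" if "z \<in> of_real ` {a<..<b}" for z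
      using that zero by (auto simp: \<Phi>_real)
  qed
  then show ?thesis
    by (simp add: \<Phi>_real)
qed

end

lemma conv_psi_add:
  fixes K :: "'a::euclidean_space \<Rightarrow> real"
  assumes [measurable]: "K \<in> borel_measurable borel" and s: "s > 0" and t: "t > 0"
    and int: "integrable lborel (\<lambda>y. K y * psi (s + t) (v - y))"
  shows "conv K (psi (s + t)) v = (\<integral>w. psi s (v - w) * conv K (psi t) w \<partial>lborel)"
proof -
  define F where "F y w = K y * (psi s (v - w) * psi t (w - y))" for y w :: 'a
  have inner: "(\<integral>w. F y w \<partial>lborel) = K y * psi (s + t) (v - y)"
    and inner_abs: "(\<integral>w. \<bar>F y w\<bar> \<partial>lborel) = \<bar>K y * psi (s + t) (v - y)\<bar>" for y
    using integral_psi_mult_psi[OF s t, of v y] s t by (simp_all add: F_def abs_mult abs_psi)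
  have F_int: "integrable (lborel \<Otimes>\<^sub>M lborel) (\<lambda>(y, w). F y w)"
  proof (rule lborel_pair.Fubini_integrable)
    show "(\<lambda>(y, w). F y w) \<in> borel_measurable (lborel \<Otimes>\<^sub>M lborel)"
      unfolding F_def by measurable
    show "integrable lborel (\<lambda>y. \<integral>w. norm (case (y, w) of (y, w) \<Rightarrow> F y w) \<partial>lborel)"
      using int by (simp add: inner_abs integrable_abs)
    show "AE y in lborel. integrable lborel (\<lambda>w. case (y, w) of (y, w) \<Rightarrow> F y w)"
      unfolding F_def using integrable_psi_mult_psi[OF s t] by auto
  qed
  have "conv K (psi (s + t)) v = (\<integral>y. (\<integral>w. F y w \<partial>lborel) \<partial>lborel)"
    by (simp add: conv_def inner)
  also have "\<dots> = (\<integral>w. (\<integral>y. F y w \<partial>lborel) \<partial>lborel)"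
    using lborel_pair.Fubini_integral[OF F_int] by simp
  also have "\<dots> = (\<integral>w. psi s (v - w) * conv K (psi t) w \<partial>lborel)"
  proof (intro Bochner_Integration.integral_cong refl)
    fix w
    have "(\<integral>y. F y w \<partial>lborel) = (\<integral>y. psi s (v - w) * (K y * psi t (w - y)) \<partial>lborel)"
      unfolding F_def by (simp add: mult_ac)
    then show "(\<integral>y. F y w \<partial>lborel) = psi s (v - w) * conv K (psi t) w"
      by (simp add: conv_def)
  qed
  finally show ?thesis .
qed

lemma conv_psi_eq_0_at_all_times:
  fixes K :: "'a::euclidean_space \<Rightarrow> real"
  assumes [measurable]: "K \<in> borel_measurable borel"
    and K_int: "\<And>t v. t > 0 \<Longrightarrow> integrable lborel (\<lambda>y. K y * psi t (v - y))"
    and \<epsilon>: "\<epsilon> > 0" and zero: "\<And>v. conv K (psi \<epsilon>) v = 0"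
    and t: "t > 0"
  shows "conv K (psi t) v = 0"
proof -
  define r where "r y = (norm (v - y))\<^sup>2" for y
  have gauss: "K y * exp (- c * r y) = (pi / c) powr (real DIM('a) / 2) * (K y * psi (1 / (2 * c)) (v - y))"
    if "c > 0" for c y
    unfolding r_def exp_eq_psi[OF that] by (simp add: mult.left_commute)
  have laplace: "(\<integral>y. K y * exp (- c * r y) \<partial>lborel) = (pi / c) powr (real DIM('a) / 2) * conv K (psi (1 / (2 * c))) v"
    if "c > 0" for c
    unfolding conv_def gauss[OF that] by (rule integral_mult_right_zero)
  have "(\<integral>y. K y * exp (- (1 / (2 * t)) * r y) \<partial>lborel) = 0"
  proof (rule laplace_eq_0[where a = "1 / (4 * \<epsilon>)" and b = "1 / (2 * \<epsilon>)"])
    show "r \<in> borel_measurable borel" "\<And>y. 0 \<le> r y"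
      unfolding r_def by simp_all
    show "integrable lborel (\<lambda>y. K y * exp (- c * r y))" if "c > 0" for c
      unfolding gauss[OF that] using K_int[of "1 / (2 * c)" v] that by simp
    show "0 < 1 / (4 * \<epsilon>)" "1 / (4 * \<epsilon>) < 1 / (2 * \<epsilon>)" "0 < 1 / (2 * t)"
      using \<epsilon> t by (simp_all add: field_simps)
    show "(\<integral>y. K y * exp (- c * r y) \<partial>lborel) = 0" if c: "1 / (4 * \<epsilon>) < c" "c < 1 / (2 * \<epsilon>)" for c
    proof -
      have "c > 0"
        using c \<epsilon> by (smt (verit) divide_pos_pos)
      have "1 / (2 * c) - \<epsilon> > 0"
        using c \<open>c > 0\<close> \<epsilon> by (simp add: field_simps)
      then have "conv K (psi ((1 / (2 * c) - \<epsilon>) + \<epsilon>)) v = 0"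
        using \<epsilon> K_int[of "1 / (2 * c)" v] \<open>c > 0\<close> by (subst conv_psi_add) (simp_all add: zero)
      then show ?thesis
        using laplace[OF \<open>c > 0\<close>] by simp
    qed
  qed measurable
  then show ?thesis
    using laplace[of "1 / (2 * t)"] t by simp
qed

lemma power2_norm_add_le: "(norm (x + y))\<^sup>2 \<le> 2 * (norm x)\<^sup>2 + 2 * (norm (y::'a::real_normed_vector))\<^sup>2"
proof -
  have "(norm (x + y))\<^sup>2 \<le> (norm x + norm y)\<^sup>2"
    by (intro power_mono norm_triangle_ineq) simp
  also have "\<dots> \<le> 2 * (norm x)\<^sup>2 + 2 * (norm y)\<^sup>2"
    using zero_le_power2[of "norm x - norm y"] by (simp add: power2_eq_square algebra_simps)
  finally show ?thesis .
qed

lemma integrable_psi_mult_quadratic: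
  assumes t: "t > 0"
  shows "integrable lborel (\<lambda>y. (1 + (norm y)\<^sup>2) * psi t (v - y))"
proof -
  have "integrable lborel (\<lambda>y. psi t y * (1 + 0 \<bullet> (v - y) + 1 * (norm (v - y))\<^sup>2))"
    by (rule integrable_psi_quadratic[OF t])
  then show ?thesis
    using lborel_integral_reflect(1)[of "\<lambda>y. (1 + (norm y)\<^sup>2) * psi t (v - y)" v]
    by (simp add: mult.commute)
qed

lemma conv_psi_rescale:
  fixes \<phi> :: "'a::euclidean_space \<Rightarrow> real"
  assumes [measurable]: "\<phi> \<in> borel_measurable borel" and t: "t > 0"
  shows "conv \<phi> (psi t) v = (\<integral>x. \<phi> (v + sqrt t *\<^sub>R x) * psi 1 x \<partial>lborel)"
proof -
  have "conv \<phi> (psi t) v = sqrt t ^ DIM('a) * (\<integral>x. \<phi> (v + sqrt t *\<^sub>R x) * psi t (sqrt t *\<^sub>R x) \<partial>lborel)"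
    unfolding conv_def using t
    by (subst lborel_integral_affine(2)[where c = "sqrt t" and a = v]) (simp_all add: psi_minus)
  also have "\<dots> = (\<integral>x. \<phi> (v + sqrt t *\<^sub>R x) * (sqrt t ^ DIM('a) * psi t (sqrt t *\<^sub>R x)) \<partial>lborel)"
    by (simp add: mult.left_commute)
  finally show ?thesis
    by (simp add: psi_scale[OF t])
qed

lemma tendsto_conv_psi:
  fixes \<phi> :: "'a::euclidean_space \<Rightarrow> real"
  assumes cont: "continuous_on UNIV \<phi>" and bound: "\<And>y. \<bar>\<phi> y\<bar> \<le> C * (1 + (norm y)\<^sup>2)"
  shows "((\<lambda>t. conv \<phi> (psi t) v) \<longlongrightarrow> \<phi> v) (at_right 0)"
proof -
  have [measurable]: "\<phi> \<in> borel_measurable borel"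
    by (rule borel_measurable_continuous_onI[OF cont])
  have C: "C \<ge> 0"
    using bound[of 0] by simp
  define g where "g x = C * (1 + 2 * (norm v)\<^sup>2) * psi 1 x + 2 * C * (psi 1 x * (norm x)\<^sup>2)" for x :: 'a
  have g_int: "integrable lborel g"
    unfolding g_def using integrable_psi[of 1 "0::'a"] integrable_psi_norm_power2[of 1, where 'a='a] by simp
  have lim: "((\<lambda>t. \<phi> (v + sqrt t *\<^sub>R x) * psi 1 x) \<longlongrightarrow> \<phi> v * psi 1 x) (at_right 0)" for x
  proof -
    have "((\<lambda>t. v + sqrt t *\<^sub>R x) \<longlongrightarrow> v + sqrt 0 *\<^sub>R x) (at_right 0)"
      by (intro tendsto_intros)
    then show ?thesis
      by (intro tendsto_intros continuous_on_tendsto_compose[OF cont]) auto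
  qed
  have dominated: "eventually (\<lambda>t. AE x in lborel. norm (\<phi> (v + sqrt t *\<^sub>R x) * psi 1 x) \<le> g x) (at_right 0)"
    using eventually_at_right_real[OF zero_less_one]
  proof eventually_elim
    case (elim t)
    have grow: "\<bar>\<phi> (v + sqrt t *\<^sub>R x)\<bar> \<le> C * (1 + 2 * (norm v)\<^sup>2 + 2 * (norm x)\<^sup>2)" for x
    proof -
      have "(norm (sqrt t *\<^sub>R x))\<^sup>2 \<le> (norm x)\<^sup>2"
        using elim by (simp add: power_mult_distrib mult_left_le_one_le)
      then have "(norm (v + sqrt t *\<^sub>R x))\<^sup>2 \<le> 2 * (norm v)\<^sup>2 + 2 * (norm x)\<^sup>2"
        using power2_norm_add_le[of v "sqrt t *\<^sub>R x"] by linarith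
      then show ?thesis
        using bound[of "v + sqrt t *\<^sub>R x"] C by (smt (verit) mult_left_mono)
    qed
    show ?case
    proof (rule AE_I2)
      fix x :: 'a
      have "\<bar>\<phi> (v + sqrt t *\<^sub>R x)\<bar> * psi 1 x \<le> C * (1 + 2 * (norm v)\<^sup>2 + 2 * (norm x)\<^sup>2) * psi 1 x"
        using grow[of x] psi_nonneg[of 1 x] by (intro mult_right_mono) auto
      then show "norm (\<phi> (v + sqrt t *\<^sub>R x) * psi 1 x) \<le> g x"
        unfolding g_def using psi_nonneg[of 1 x] by (simp add: abs_mult algebra_simps)
    qed
  qed
  have "((\<lambda>t. \<integral>x. \<phi> (v + sqrt t *\<^sub>R x) * psi 1 x \<partial>lborel) \<longlongrightarrow> (\<integral>x. \<phi> v * psi 1 (x::'a) \<partial>lborel)) (at_right 0)"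
    by (rule integral_dominated_convergence_at[OF _ _ g_int lim dominated]) measurable
  moreover have "eventually (\<lambda>t. (\<integral>x. \<phi> (v + sqrt t *\<^sub>R x) * psi 1 x \<partial>lborel) = conv \<phi> (psi t) v) (at_right 0)"
    using eventually_at_right_less by (rule eventually_mono) (simp add: conv_psi_rescale)
  ultimately show ?thesis
    using integral_psi[of 1 "0::'a"] by (simp add: tendsto_cong)
qed

lemma continuous_eq_0_if_conv_psi_eq_0:
  fixes K :: "'a::euclidean_space \<Rightarrow> real"
  assumes cont: "continuous_on UNIV K" and bound: "\<And>y. \<bar>K y\<bar> \<le> C * (1 + (norm y)\<^sup>2)"
    and \<epsilon>: "\<epsilon> > 0" and zero: "\<And>v. conv K (psi \<epsilon>) v = 0"
  shows "K v = 0"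
proof -
  have [measurable]: "K \<in> borel_measurable borel"
    by (rule borel_measurable_continuous_onI[OF cont])
  have C: "C \<ge> 0"
    using bound[of 0] by simp
  have K_int: "integrable lborel (\<lambda>y. K y * psi t (v - y))" if t: "t > 0" for t v
  proof (rule Bochner_Integration.integrable_bound)
    show "integrable lborel (\<lambda>y. C * ((1 + (norm y)\<^sup>2) * psi t (v - y)))"
      using integrable_psi_mult_quadratic[OF t, of v] by simp
    show "AE y in lborel. norm (K y * psi t (v - y)) \<le> norm (C * ((1 + (norm y)\<^sup>2) * psi t (v - y)))"
    proof (rule AE_I2)
      fix y
      have "\<bar>K y\<bar> * psi t (v - y) \<le> C * (1 + (norm y)\<^sup>2) * psi t (v - y)"
        using bound[of y] psi_nonneg[OF t, of "v - y"] by (rule mult_right_mono)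
      then show "norm (K y * psi t (v - y)) \<le> norm (C * ((1 + (norm y)\<^sup>2) * psi t (v - y)))"
        using C t by (simp add: abs_mult abs_psi mult.assoc)
    qed
  qed measurable
  have "eventually (\<lambda>t. conv K (psi t) v = 0) (at_right 0)"
    using eventually_at_right_less
    by (rule eventually_mono) (rule conv_psi_eq_0_at_all_times[OF _ K_int \<epsilon> zero], simp_all)
  with tendsto_conv_psi[OF cont bound, of v] have "((\<lambda>t. 0) \<longlongrightarrow> K v) (at_right (0::real))"
    by (rule Lim_transform_eventually)
  then show ?thesis
    by (simp add: tendsto_const_iff)
qed

lemma continuous_eq_if_conv_psi_eq:
  fixes g p :: "'a::euclidean_space \<Rightarrow> real"
  assumes cont: "continuous_on UNIV g" "continuous_on UNIV p"
    and bound: "\<And>w. \<bar>g w\<bar> \<le> C * (1 + (norm w)\<^sup>2)" "\<And>w. \<bar>p w\<bar> \<le> C' * (1 + (norm w)\<^sup>2)"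
    and \<epsilon>: "\<epsilon> > 0"
    and int: "\<And>w. integrable lborel (\<lambda>y. g y * psi \<epsilon> (w - y))" "\<And>w. integrable lborel (\<lambda>y. p y * psi \<epsilon> (w - y))"
    and eq: "\<And>w. conv g (psi \<epsilon>) w = conv p (psi \<epsilon>) w"
  shows "g v = p v"
proof -
  have "continuous_on UNIV (\<lambda>w. g w - p w)"
    using cont by (rule continuous_on_diff)
  moreover have "\<bar>g w - p w\<bar> \<le> (C + C') * (1 + (norm w)\<^sup>2)" for w
    using bound[of w] abs_triangle_ineq4[of "g w" "p w"] distrib_right[of C C' "1 + (norm w)\<^sup>2"]
    by linarith
  moreover have "conv (\<lambda>w. g w - p w) (psi \<epsilon>) w = 0" for w
  proof -
    have "conv (\<lambda>w. g w - p w) (psi \<epsilon>) w = conv g (psi \<epsilon>) w - conv p (psi \<epsilon>) w"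
      unfolding conv_def left_diff_distrib by (rule Bochner_Integration.integral_diff[OF int])
    then show ?thesis
      by (simp add: eq)
  qed
  ultimately have "g v - p v = 0"
    by (rule continuous_eq_0_if_conv_psi_eq_0[OF _ _ \<epsilon>])
  then show ?thesis
    by simp
qed

lemma abs_conv_psi_le:
  fixes \<phi> :: "'a::euclidean_space \<Rightarrow> real"
  assumes [measurable]: "\<phi> \<in> borel_measurable borel" and bound: "\<And>y. \<bar>\<phi> y\<bar> \<le> B" and t: "t > 0"
  shows "\<bar>conv \<phi> (psi t) y\<bar> \<le> B"
proof -
  have B: "B \<ge> 0"
    using bound[of 0] by simp
  have B_int: "integrable lborel (\<lambda>v. B * psi t (y - v))"
    using integrable_psi'[OF t, of y] by simp
  have le: "\<bar>\<phi> v * psi t (y - v)\<bar> \<le> B * psi t (y - v)" for v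
    using bound[of v] psi_nonneg[OF t, of "y - v"] by (simp add: abs_mult abs_psi[OF t] mult_right_mono)
  then have norm_le: "norm (\<phi> v * psi t (y - v)) \<le> norm (B * psi t (y - v))" for v
    using B psi_nonneg[OF t, of "y - v"] by simp
  have int: "integrable lborel (\<lambda>v. \<phi> v * psi t (y - v))"
  proof (rule Bochner_Integration.integrable_bound[OF B_int])
    show "AE v in lborel. norm (\<phi> v * psi t (y - v)) \<le> norm (B * psi t (y - v))"
      by (intro AE_I2 norm_le)
  qed measurable
  have "\<bar>conv \<phi> (psi t) y\<bar> \<le> (\<integral>v. B * psi t (y - v) \<partial>lborel)"
    unfolding conv_def using int B_int le by (intro integral_abs_bound_integral) auto
  also have "\<dots> = B"
    using integral_psi'[OF t, of y] by simp
  finally show ?thesis .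
qed

lemma integral_mult_conv_psi:
  fixes K \<phi> :: "'a::euclidean_space \<Rightarrow> real"
  assumes K_int: "integrable lborel K" and [measurable]: "\<phi> \<in> borel_measurable borel"
    and bound: "\<And>y. \<bar>\<phi> y\<bar> \<le> B" and t: "t > 0"
  shows "(\<integral>y. K y * conv \<phi> (psi t) y \<partial>lborel) = (\<integral>v. \<phi> v * conv K (psi t) v \<partial>lborel)"
proof -
  have [measurable]: "K \<in> borel_measurable borel"
    using K_int by auto
  have B: "B \<ge> 0"
    using bound[of 0] by simp
  define F where "F y v = K y * (\<phi> v * psi t (y - v))" for y v :: 'a
  have G_int: "integrable (lborel \<Otimes>\<^sub>M lborel) (\<lambda>(y, v). B * \<bar>K y\<bar> * psi t (y - v))"
  proof (rule lborel_pair.Fubini_integrable)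
    have "(\<integral>v. \<bar>B * \<bar>K y\<bar> * psi t (y - v)\<bar> \<partial>lborel) = B * \<bar>K y\<bar>" for y
      using integral_psi'[OF t, of y] B t by (simp add: abs_mult abs_psi)
    then show "integrable lborel (\<lambda>y. \<integral>v. norm (case (y, v) of (y, v) \<Rightarrow> B * \<bar>K y\<bar> * psi t (y - v)) \<partial>lborel)"
      using K_int by simp
    show "AE y in lborel. integrable lborel (\<lambda>v. case (y, v) of (y, v) \<Rightarrow> B * \<bar>K y\<bar> * psi t (y - v))"
      by (simp add: integrable_psi'[OF t])
  qed measurable
  have pointwise: "\<bar>K y\<bar> * (\<bar>\<phi> v\<bar> * psi t (y - v)) \<le> B * \<bar>K y\<bar> * psi t (y - v)" for y v
  proof -
    have "\<bar>\<phi> v\<bar> * psi t (y - v) \<le> B * psi t (y - v)"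
      using bound[of v] psi_nonneg[OF t, of "y - v"] by (rule mult_right_mono)
    then have "\<bar>K y\<bar> * (\<bar>\<phi> v\<bar> * psi t (y - v)) \<le> \<bar>K y\<bar> * (B * psi t (y - v))"
      by (rule mult_left_mono) simp
    then show ?thesis
      by (simp add: mult_ac)
  qed
  have F_int: "integrable (lborel \<Otimes>\<^sub>M lborel) (\<lambda>(y, v). F y v)"
  proof (rule Bochner_Integration.integrable_bound[OF G_int])
    show "AE x in lborel \<Otimes>\<^sub>M lborel. norm (case x of (y, v) \<Rightarrow> F y v) \<le> norm (case x of (y, v) \<Rightarrow> B * \<bar>K y\<bar> * psi t (y - v))"
      using B by (intro AE_I2) (auto simp: F_def abs_mult abs_psi[OF t] pointwise)
  qed (simp add: F_def)
  have "(\<integral>y. K y * conv \<phi> (psi t) y \<partial>lborel) = (\<integral>y. (\<integral>v. F y v \<partial>lborel) \<partial>lborel)"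
    by (simp add: F_def conv_def)
  also have "\<dots> = (\<integral>v. (\<integral>y. F y v \<partial>lborel) \<partial>lborel)"
    using lborel_pair.Fubini_integral[OF F_int] by simp
  also have "\<dots> = (\<integral>v. \<phi> v * conv K (psi t) v \<partial>lborel)"
  proof (intro Bochner_Integration.integral_cong refl)
    fix v
    have "(\<integral>y. F y v \<partial>lborel) = (\<integral>y. \<phi> v * (K y * psi t (v - y)) \<partial>lborel)"
      unfolding F_def by (simp add: mult_ac psi_minus_commute[of t _ v])
    then show "(\<integral>y. F y v \<partial>lborel) = \<phi> v * conv K (psi t) v"
      by (simp add: conv_def)
  qed
  finally show ?thesis .
qed

lemma integral_mult_eq_0_if_conv_psi_eq_0:
  fixes K \<phi> :: "'a::euclidean_space \<Rightarrow> real"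
  assumes K_int: "integrable lborel K" and zero: "\<And>t v. t > 0 \<Longrightarrow> conv K (psi t) v = 0"
    and cont: "continuous_on UNIV \<phi>" and bound: "\<And>y. \<bar>\<phi> y\<bar> \<le> B"
  shows "(\<integral>y. K y * \<phi> y \<partial>lborel) = 0"
proof -
  have [measurable]: "K \<in> borel_measurable borel"
    using K_int by auto
  have \<phi>_meas [measurable]: "\<phi> \<in> borel_measurable borel"
    by (rule borel_measurable_continuous_onI[OF cont])
  have B: "B \<ge> 0"
    using bound[of 0] by simp
  have lim: "((\<lambda>t. K y * conv \<phi> (psi t) y) \<longlongrightarrow> K y * \<phi> y) (at_right 0)" for y
  proof -
    have "\<bar>\<phi> y\<bar> \<le> B * (1 + (norm y)\<^sup>2)" for y
      using bound[of y] B by (smt (verit) mult_le_cancel_left1 zero_le_power2)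
    then show ?thesis
      by (intro tendsto_mult_left tendsto_conv_psi[OF cont])
  qed
  have dominated: "eventually (\<lambda>t. AE y in lborel. norm (K y * conv \<phi> (psi t) y) \<le> B * \<bar>K y\<bar>) (at_right 0)"
    using eventually_at_right_less
  proof eventually_elim
    case (elim t)
    have "\<bar>K y\<bar> * \<bar>conv \<phi> (psi t) y\<bar> \<le> \<bar>K y\<bar> * B" for y
      using abs_conv_psi_le[OF \<phi>_meas bound elim] by (rule mult_left_mono) simp
    then show ?case
      by (intro AE_I2) (simp add: abs_mult mult.commute)
  qed
  have "((\<lambda>t. \<integral>y. K y * conv \<phi> (psi t) y \<partial>lborel) \<longlongrightarrow> (\<integral>y. K y * \<phi> y \<partial>lborel)) (at_right 0)"
    by (rule integral_dominated_convergence_at[OF _ _ _ lim dominated]) (use K_int in \<open>auto simp: conv_def\<close>)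
  moreover have "eventually (\<lambda>t. (\<integral>y. K y * conv \<phi> (psi t) y \<partial>lborel) = 0) (at_right 0)"
    using eventually_at_right_less
    by (rule eventually_mono) (simp add: integral_mult_conv_psi[OF K_int _ bound] zero)
  ultimately have "((\<lambda>t. 0) \<longlongrightarrow> (\<integral>y. K y * \<phi> y \<partial>lborel)) (at_right (0::real))"
    by (rule Lim_transform_eventually)
  then show ?thesis
    by (simp add: tendsto_const_iff)
qed

lemma tendsto_min_infdist_indicator:
  fixes U :: "'a::metric_space set"
  assumes U: "open U" "U \<noteq> UNIV"
  shows "(\<lambda>n. min 1 (real n * infdist y (- U))) \<longlonglongrightarrow> indicator U y"
proof (cases "y \<in> U")
  case True
  then have pos: "infdist y (- U) > 0"
    using U by (subst infdist_pos_not_in_closed) auto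
  obtain N :: nat where N: "1 / infdist y (- U) < real N"
    using reals_Archimedean2 by blast
  have "eventually (\<lambda>n. min 1 (real n * infdist y (- U)) = 1) sequentially"
    unfolding eventually_sequentially
  proof (intro exI allI impI)
    fix n
    assume "N \<le> n"
    then have "1 / infdist y (- U) < real n"
      using N by (meson of_nat_le_iff less_le_trans)
    then show "min 1 (real n * infdist y (- U)) = 1"
      using pos by (simp add: field_simps)
  qed
  then show ?thesis
    using True by (simp add: tendsto_eventually)
next
  case False
  then show ?thesis
    by simp
qed

lemma integral_indicator_open_eq_0:
  fixes K :: "'a::euclidean_space \<Rightarrow> real"
  assumes K_int: "integrable lborel K"
    and weak: "\<And>\<phi>. continuous_on UNIV \<phi> \<Longrightarrow> (\<And>y. \<bar>\<phi> y\<bar> \<le> 1) \<Longrightarrow> (\<integral>y. K y * \<phi> y \<partial>lborel) = 0"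
    and U: "open U"
  shows "(\<integral>y. K y * indicator U y \<partial>lborel) = 0"
proof (cases "U = UNIV")
  case True
  then show ?thesis
    using weak[of "\<lambda>_. 1"] by simp
next
  case False
  have [measurable]: "K \<in> borel_measurable borel" "U \<in> sets borel"
    using K_int U by auto
  define \<phi> where "\<phi> n y = min 1 (real n * infdist y (- U))" for n :: nat and y :: 'a
  have \<phi>_cont: "continuous_on UNIV (\<phi> n)" for n
    unfolding \<phi>_def by (intro continuous_intros)
  have \<phi>_bound: "\<bar>\<phi> n y\<bar> \<le> 1" for n y
    unfolding \<phi>_def using infdist_nonneg[of y "- U"] by auto
  have \<phi>_lim: "(\<lambda>n. \<phi> n y) \<longlonglongrightarrow> indicator U y" for y
    unfolding \<phi>_def by (rule tendsto_min_infdist_indicator[OF U False])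
  have "(\<lambda>n. \<integral>y. K y * \<phi> n y \<partial>lborel) \<longlonglongrightarrow> (\<integral>y. K y * indicator U y \<partial>lborel)"
  proof (rule integral_dominated_convergence[where w = "\<lambda>y. \<bar>K y\<bar>"])
    show "(\<lambda>y. K y * \<phi> n y) \<in> borel_measurable lborel" for n
      using borel_measurable_continuous_onI[OF \<phi>_cont[of n]] by measurable
    show "AE y in lborel. norm (K y * \<phi> n y) \<le> \<bar>K y\<bar>" for n
      using \<phi>_bound by (intro AE_I2) (simp add: abs_mult mult_left_le)
  qed (use K_int \<phi>_lim in \<open>auto intro!: AE_I2 tendsto_mult_left\<close>)
  then show ?thesis
    using weak[OF \<phi>_cont \<phi>_bound] by (simp add: LIMSEQ_const_iff)
qed

lemma emeasure_density_eq_integral: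
  fixes g :: "'a \<Rightarrow> real"
  assumes g_int: "integrable M g" and g_nonneg: "\<And>x. g x \<ge> 0" and A: "A \<in> sets M"
  shows "emeasure (density M g) A = ennreal (\<integral>x. g x * indicator A x \<partial>M)"
proof -
  have "integrable M (\<lambda>x. g x * indicator A x)"
    using integrable_mult_indicator[OF A g_int] by (simp add: mult.commute)
  moreover have "emeasure (density M g) A = (\<integral>\<^sup>+x. ennreal (g x * indicator A x) \<partial>M)"
    using g_int A by (simp add: emeasure_density ennreal_mult' ennreal_indicator g_nonneg)
  ultimately show ?thesis
    using g_nonneg by (simp add: nn_integral_eq_integral)
qed

lemma AE_eq_0_if_integral_open_eq_0:
  fixes K :: "'a::euclidean_space \<Rightarrow> real"
  assumes K_int: "integrable lborel K"
    and zero: "\<And>U. open U \<Longrightarrow> (\<integral>y. K y * indicator U y \<partial>lborel) = 0"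
  shows "AE y in lborel. K y = 0"
proof -
  have [measurable]: "K \<in> borel_measurable borel"
    using K_int by auto
  define P where "P y = max (K y) 0" for y
  define N where "N y = max (- K y) 0" for y
  have P_int: "integrable lborel P" and N_int: "integrable lborel N"
    unfolding P_def N_def using K_int by (auto intro!: integrable_max)
  have nonneg: "P y \<ge> 0" "N y \<ge> 0" for y
    unfolding P_def N_def by auto
  have "density lborel P = density lborel N"
  proof (rule measure_eqI_generator_eq[where E = "{S. open S}" and \<Omega> = UNIV and A = "\<lambda>_. UNIV"])
    show "emeasure (density lborel P) U = emeasure (density lborel N) U" if "U \<in> {S. open S}" for U
    proof -
      have [measurable]: "U \<in> sets borel"
        using that by simp
      have "integrable lborel (\<lambda>y. P y * indicator U y)" "integrable lborel (\<lambda>y. N y * indicator U y)"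
        using integrable_mult_indicator[of U lborel P] integrable_mult_indicator[of U lborel N] P_int N_int
        by (simp_all add: mult.commute)
      moreover have "K y * indicator U y = P y * indicator U y - N y * indicator U y" for y
        unfolding P_def N_def by (simp add: max_def left_diff_distrib[symmetric])
      ultimately have "(\<integral>y. P y * indicator U y \<partial>lborel) = (\<integral>y. N y * indicator U y \<partial>lborel)"
        using zero[of U] that by simp
      then show ?thesis
        using P_int N_int by (simp add: emeasure_density_eq_integral nonneg)
    qed
    have "emeasure (density lborel P) UNIV = ennreal (\<integral>y. P y \<partial>lborel)"
      using P_int by (simp add: emeasure_density_eq_integral nonneg)
    then show "emeasure (density lborel P) UNIV \<noteq> \<infinity>"
      by simp
  qed (auto simp: Int_stable_def sets_borel)
  then have "AE y in lborel. ennreal (P y) = ennreal (N y)"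
    by (intro sigma_finite_measure.density_unique[OF sigma_finite_lborel]) (auto simp: P_def N_def)
  then show ?thesis
    by (rule AE_mp) (intro AE_I2, auto simp: P_def N_def max_def split: if_splits)
qed

lemma AE_eq_0_if_conv_psi_eq_0:
  fixes K :: "'a::euclidean_space \<Rightarrow> real"
  assumes K_int: "integrable lborel K" and \<epsilon>: "\<epsilon> > 0" and zero: "\<And>v. conv K (psi \<epsilon>) v = 0"
  shows "AE y in lborel. K y = 0"
proof -
  have [measurable]: "K \<in> borel_measurable borel"
    using K_int by auto
  have "conv K (psi t) v = 0" if "t > 0" for t v
    using integrable_conv_psi[OF K_int] \<epsilon> zero that by (rule conv_psi_eq_0_at_all_times[rotated]) measurable
  then have "(\<integral>y. K y * \<phi> y \<partial>lborel) = 0" if "continuous_on UNIV \<phi>" "\<And>y. \<bar>\<phi> y\<bar> \<le> 1" for \<phi>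
    using integral_mult_eq_0_if_conv_psi_eq_0[OF K_int _ that] by blast
  then show ?thesis
    using integral_indicator_open_eq_0[OF K_int] by (intro AE_eq_0_if_integral_open_eq_0[OF K_int]) blast
qed

section \<open>Solutions of the entropy equation\<close>

lemma abs_quadratic_le:
  fixes w v :: "'a::real_inner"
  shows "\<bar>a + w \<bullet> v + b * (norm v)\<^sup>2\<bar> \<le> (\<bar>a\<bar> + norm w + \<bar>b\<bar>) * (1 + (norm v)\<^sup>2)"
proof -
  have "\<bar>w \<bullet> v\<bar> \<le> norm w * (1 + (norm v)\<^sup>2)"
    using Cauchy_Schwarz_ineq2[of w v] mult_left_mono[OF le_one_plus_power2[of "norm v"], of "norm w"]
    by simp
  moreover have "\<bar>b * (norm v)\<^sup>2\<bar> \<le> \<bar>b\<bar> * (1 + (norm v)\<^sup>2)"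
    by (simp add: abs_mult mult_left_mono)
  moreover have "\<bar>a\<bar> \<le> \<bar>a\<bar> * (1 + (norm v)\<^sup>2)"
    by (simp add: algebra_simps)
  moreover have "(\<bar>a\<bar> + norm w + \<bar>b\<bar>) * (1 + (norm v)\<^sup>2)
      = \<bar>a\<bar> * (1 + (norm v)\<^sup>2) + norm w * (1 + (norm v)\<^sup>2) + \<bar>b\<bar> * (1 + (norm v)\<^sup>2)"
    by (simp add: distrib_right)
  ultimately show ?thesis
    using abs_triangle_ineq[of a "w \<bullet> v + b * (norm v)\<^sup>2"] abs_triangle_ineq[of "w \<bullet> v" "b * (norm v)\<^sup>2"]
    by linarith
qed

lemma abs_ln_conv_psi_le:
  fixes f :: "'a::euclidean_space \<Rightarrow> real"
  assumes f_int: "integrable lborel f" and f_nonneg: "\<And>y. f y \<ge> 0"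
    and nonzero: "\<not> (AE v in lborel. f v = 0)" and \<epsilon>: "\<epsilon> > 0"
  obtains C where "\<And>v. \<bar>ln (conv f (psi \<epsilon>) v)\<bar> \<le> C * (1 + (norm v)\<^sup>2)"
proof -
  define M where "M = (\<integral>y. f y \<partial>lborel) * (2 * pi * \<epsilon>) powr (- real DIM('a) / 2)"
  obtain c where c: "c > 0" and lower: "\<And>v. c * exp (- (norm v)\<^sup>2 / \<epsilon>) \<le> conv f (psi \<epsilon>) v"
    using conv_psi_ge_gaussian[OF f_int f_nonneg \<epsilon> nonzero] by blast
  have pos: "conv f (psi \<epsilon>) v > 0" for v
    by (rule conv_psi_pos[OF f_int f_nonneg \<epsilon> nonzero])
  have upper: "conv f (psi \<epsilon>) v \<le> M" for v
    unfolding M_def by (rule conv_psi_le[OF f_int f_nonneg \<epsilon>])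
  show ?thesis
  proof (rule that)
    fix v :: 'a
    have low: "ln c - (norm v)\<^sup>2 / \<epsilon> \<le> ln (conv f (psi \<epsilon>) v)"
      using ln_le_cancel_iff[of "c * exp (- (norm v)\<^sup>2 / \<epsilon>)" "conv f (psi \<epsilon>) v"] lower[of v] pos[of v] c
      by (simp add: ln_mult)
    have up: "ln (conv f (psi \<epsilon>) v) \<le> ln M"
      using upper[of v] pos[of v] by simp
    have growth: "(norm v)\<^sup>2 / \<epsilon> \<le> (1 / \<epsilon>) * (1 + (norm v)\<^sup>2)"
      using \<epsilon> by (simp add: divide_right_mono)
    have const: "\<bar>ln M\<bar> + \<bar>ln c\<bar> \<le> (\<bar>ln M\<bar> + \<bar>ln c\<bar>) * (1 + (norm v)\<^sup>2)"
      by (simp add: algebra_simps)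
    have distrib: "(\<bar>ln M\<bar> + \<bar>ln c\<bar> + 1 / \<epsilon>) * (1 + (norm v)\<^sup>2)
        = (\<bar>ln M\<bar> + \<bar>ln c\<bar>) * (1 + (norm v)\<^sup>2) + (1 / \<epsilon>) * (1 + (norm v)\<^sup>2)"
      by (simp add: distrib_right)
    have nonneg: "0 \<le> (1 / \<epsilon>) * (1 + (norm v)\<^sup>2)"
      using \<epsilon> by simp
    show "\<bar>ln (conv f (psi \<epsilon>) v)\<bar> \<le> (\<bar>ln M\<bar> + \<bar>ln c\<bar> + 1 / \<epsilon>) * (1 + (norm v)\<^sup>2)"
    proof (rule abs_leI)
      show "ln (conv f (psi \<epsilon>) v) \<le> (\<bar>ln M\<bar> + \<bar>ln c\<bar> + 1 / \<epsilon>) * (1 + (norm v)\<^sup>2)"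
        using up const distrib nonneg abs_ge_self[of "ln M"] abs_ge_zero[of "ln c"] by linarith
      show "- ln (conv f (psi \<epsilon>) v) \<le> (\<bar>ln M\<bar> + \<bar>ln c\<bar> + 1 / \<epsilon>) * (1 + (norm v)\<^sup>2)"
        using low growth const distrib abs_ge_minus_self[of "ln c"] abs_ge_zero[of "ln M"] by linarith
    qed
  qed
qed

lemma conv_psi_eq_exp_quadratic:
  fixes f :: "'a::euclidean_space \<Rightarrow> real" and l1 :: 'a
  assumes \<epsilon>: "\<epsilon> > 0" and f_int: "integrable lborel f" and f_nonneg: "\<And>y. f y \<ge> 0"
    and nonzero: "\<not> (AE v in lborel. f v = 0)"
    and ln_int: "\<And>v. integrable lborel (\<lambda>y. psi \<epsilon> y * ln (conv f (psi \<epsilon>) (v - y)))"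
    and eq: "\<And>v. conv (psi \<epsilon>) (\<lambda>w. ln (conv f (psi \<epsilon>) w)) v = l0 + l1 \<bullet> v + l2 / 2 * (norm v)\<^sup>2"
  shows "conv f (psi \<epsilon>) v = exp ((l0 - l2 * \<epsilon> * real DIM('a) / 2) + l1 \<bullet> v + l2 / 2 * (norm v)\<^sup>2)"
proof -
  define a where "a = l0 - l2 * \<epsilon> * real DIM('a) / 2"
  define g where "g = (\<lambda>w. ln (conv f (psi \<epsilon>) w))"
  define p where "p = (\<lambda>w. a + l1 \<bullet> w + l2 / 2 * (norm w)\<^sup>2)"
  have pos: "conv f (psi \<epsilon>) w > 0" for w
    by (rule conv_psi_pos[OF f_int f_nonneg \<epsilon> nonzero])
  have g_cont: "continuous_on UNIV g"
    unfolding g_def using continuous_on_conv_psi[OF f_int \<epsilon>] pos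
    by (intro continuous_on_ln) (auto simp: less_imp_neq[symmetric])
  have p_cont: "continuous_on UNIV p"
    unfolding p_def by (intro continuous_intros)
  have g_meas [measurable]: "g \<in> borel_measurable borel" and p_meas [measurable]: "p \<in> borel_measurable borel"
    using g_cont p_cont by (auto intro: borel_measurable_continuous_onI)
  obtain C where g_bound: "\<And>w. \<bar>g w\<bar> \<le> C * (1 + (norm w)\<^sup>2)"
    unfolding g_def using abs_ln_conv_psi_le[OF f_int f_nonneg nonzero \<epsilon>] by blast
  define C' where "C' = \<bar>a\<bar> + norm l1 + \<bar>l2 / 2\<bar>"
  have p_bound: "\<bar>p w\<bar> \<le> C' * (1 + (norm w)\<^sup>2)" for w
    unfolding p_def C'_def by (rule abs_quadratic_le)
  have conv_g: "conv g (psi \<epsilon>) w = l0 + l1 \<bullet> w + l2 / 2 * (norm w)\<^sup>2"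
    and int_g: "integrable lborel (\<lambda>y. g y * psi \<epsilon> (w - y))" for w
    using eq[of w] ln_int[of w] conv_psi_commute[OF g_meas, of \<epsilon> w] unfolding g_def by simp_all
  have "conv (psi \<epsilon>) p w = a + l1 \<bullet> w + l2 / 2 * (norm w)\<^sup>2 + l2 / 2 * \<epsilon> * real DIM('a)"
    and "integrable lborel (\<lambda>y. psi \<epsilon> y * p (w - y))" for w
    unfolding p_def using conv_psi_quadratic[OF \<epsilon>] integrable_psi_quadratic[OF \<epsilon>] by blast+
  then have conv_p: "conv p (psi \<epsilon>) w = l0 + l1 \<bullet> w + l2 / 2 * (norm w)\<^sup>2"
    and int_p: "integrable lborel (\<lambda>y. p y * psi \<epsilon> (w - y))" for w
    using conv_psi_commute[OF p_meas, of \<epsilon> w] by (simp_all add: a_def)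
  have "g v = p v"
    by (rule continuous_eq_if_conv_psi_eq[OF g_cont p_cont g_bound p_bound \<epsilon> int_g int_p]) (simp add: conv_g conv_p)
  then have "ln (conv f (psi \<epsilon>) v) = a + l1 \<bullet> v + l2 / 2 * (norm v)\<^sup>2"
    by (simp add: g_def p_def)
  then show ?thesis
    using pos[of v] unfolding a_def[symmetric] by (metis exp_ln)
qed

lemma quadratic_coeff_neg_if_integrable_exp:
  fixes w :: "'a::euclidean_space"
  assumes int: "integrable lborel (\<lambda>v. exp (a + w \<bullet> v + b * (norm v)\<^sup>2))"
  shows "b < 0"
proof (rule ccontr)
  assume "\<not> b < 0"
  define E where "E v = exp (a + w \<bullet> v + b * (norm v)\<^sup>2)" for v :: 'a
  have [measurable]: "E \<in> borel_measurable borel"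
    unfolding E_def by measurable
  have E_int: "integrable lborel E"
    using int by (simp add: E_def[abs_def])
  then have "integrable lborel (\<lambda>v. E (0 - v))"
    using lborel_integral_reflect(1)[of E 0] by simp
  then have "integrable lborel (\<lambda>v. E v + E (- v))"
    using E_int by simp
  moreover have "E v > 0" for v
    by (simp add: E_def)
  ultimately have finite: "(\<integral>\<^sup>+v. ennreal (E v + E (- v)) \<partial>lborel) < \<infinity>"
    by (subst nn_integral_eq_integral) (auto intro: add_nonneg_nonneg less_imp_le)
  have "exp a \<le> E v + E (- v)" for v
  proof -
    have sq: "0 \<le> b * (norm v)\<^sup>2"
      using \<open>\<not> b < 0\<close> by simp
    have pos: "E v > 0" "E (- v) > 0"
      by (simp_all add: E_def)
    show ?thesis
    proof (cases "w \<bullet> v \<ge> 0")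
      case True
      then have "exp a \<le> E v"
        unfolding E_def using sq by simp
      then show ?thesis
        using pos by linarith
    next
      case False
      then have "exp a \<le> E (- v)"
        unfolding E_def using sq by simp
      then show ?thesis
        using pos by linarith
    qed
  qed
  then have "(\<integral>\<^sup>+v. ennreal (exp a) \<partial>(lborel::'a measure)) \<le> (\<integral>\<^sup>+v. ennreal (E v + E (- v)) \<partial>lborel)"
    by (intro nn_integral_mono ennreal_leI)
  moreover have "(\<integral>\<^sup>+v. ennreal (exp a) \<partial>(lborel::'a measure)) = \<infinity>"
    by (simp add: ennreal_mult_top)
  ultimately show False
    using finite by simp
qed

lemma exp_quadratic_eq_psi:
  fixes w v :: "'a::euclidean_space"
  assumes b: "b < 0"
  shows "exp (a + w \<bullet> v + b / 2 * (norm v)\<^sup>2)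
    = exp (a + (norm w)\<^sup>2 / (2 * \<bar>b\<bar>)) * (2 * pi / \<bar>b\<bar>) powr (real DIM('a) / 2)
      * psi (1 / \<bar>b\<bar>) (v - (1 / \<bar>b\<bar>) *\<^sub>R w)"
proof -
  define L where "L = \<bar>b\<bar>"
  define u where "u = (1 / L) *\<^sub>R w"
  have L: "L > 0" "b = - L"
    using b by (simp_all add: L_def)
  have expand: "(norm (v - u))\<^sup>2 = (norm v)\<^sup>2 - 2 * (u \<bullet> v) + (norm u)\<^sup>2"
    by (simp add: power2_norm_eq_inner inner_diff_left inner_diff_right inner_commute)
  have uv: "u \<bullet> v = (w \<bullet> v) / L" and uu: "(norm u)\<^sup>2 = (norm w)\<^sup>2 / L\<^sup>2"
    using L by (simp_all add: u_def power_divide)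
  have "(norm (v - u))\<^sup>2 / (2 * (1 / L)) = L / 2 * (norm v)\<^sup>2 - w \<bullet> v + (norm w)\<^sup>2 / (2 * L)"
    unfolding expand uv uu using L by (simp add: field_simps power2_eq_square)
  then have square: "a + w \<bullet> v + b / 2 * (norm v)\<^sup>2 = a + (norm w)\<^sup>2 / (2 * L) + - (norm (v - u))\<^sup>2 / (2 * (1 / L))"
    by (simp add: L(2) algebra_simps)
  have "(2 * pi / L) powr (real DIM('a) / 2) * (2 * pi * (1 / L)) powr (- real DIM('a) / 2) = 1"
    using L by (simp add: powr_add[symmetric])
  then show ?thesis
    unfolding square exp_add psi_def L_def[symmetric] u_def[symmetric] by (simp add: mult_ac)
qed

lemma nn_integral_psi_mult_norm_power2:
  fixes y u :: "'a::euclidean_space"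
  assumes t: "t > 0"
  shows "(\<integral>\<^sup>+v. ennreal (psi t (v - y) * (norm (v - u))\<^sup>2) \<partial>lborel) = ennreal ((norm (y - u))\<^sup>2 + t * real DIM('a))"
proof -
  define g where "g v = psi t (v - y) * (norm (v - u))\<^sup>2" for v
  have [measurable]: "g \<in> borel_measurable borel"
    unfolding g_def by measurable
  have reflect: "g (y - x) = psi t x * (0 + 0 \<bullet> ((y - u) - x) + 1 * (norm ((y - u) - x))\<^sup>2)" for x
    unfolding g_def by (simp add: psi_minus algebra_simps)
  have g_int: "integrable lborel g"
    using lborel_integral_reflect(1)[of g y] integrable_psi_quadratic[OF t, of 0 0 "y - u" 1] by (simp add: reflect)
  have "(\<integral>v. g v \<partial>lborel) = (norm (y - u))\<^sup>2 + t * real DIM('a)"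
    using lborel_integral_reflect(2)[of g y] conv_psi_quadratic[OF t, of 0 0 1 "y - u"]
    by (simp add: reflect conv_def)
  moreover have "g v \<ge> 0" for v
    unfolding g_def using psi_nonneg[OF t, of "v - y"] by simp
  then have "(\<integral>\<^sup>+v. ennreal (g v) \<partial>lborel) = ennreal (\<integral>v. g v \<partial>lborel)"
    using g_int by (intro nn_integral_eq_integral) auto
  ultimately show ?thesis
    by (simp add: g_def)
qed

context
  fixes f :: "'a::euclidean_space \<Rightarrow> real" and \<epsilon> A S :: real and u :: 'a
  assumes f_int: "integrable lborel f" and f_nonneg: "\<And>y. f y \<ge> 0"
    and \<epsilon>: "\<epsilon> > 0" and S: "S > 0" and A: "A \<ge> 0"
    and conv_eq: "\<And>v. conv f (psi \<epsilon>) v = A * psi S (v - u)"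
begin

lemma integral_eq_if_conv_psi_eq: "(\<integral>y. f y \<partial>lborel) = A"
proof -
  have "ennreal (\<integral>y. f y \<partial>lborel) = (\<integral>\<^sup>+v. ennreal A * ennreal (psi S (v - u)) \<partial>lborel)"
    using nn_integral_conv_psi[OF f_int f_nonneg \<epsilon>] A by (simp add: conv_eq ennreal_mult')
  also have "\<dots> = ennreal A"
    by (simp add: nn_integral_cmult nn_integral_psi[OF S])
  finally show ?thesis
    using A f_nonneg by (simp add: integral_nonneg_AE)
qed

lemma variance_gt_if_conv_psi_eq:
  assumes nonzero: "\<not> (AE v in lborel. f v = 0)"
  shows "S > \<epsilon>"
proof (rule ccontr)
  assume "\<not> S > \<epsilon>"
  have [measurable]: "f \<in> borel_measurable borel"
    using f_int by auto
  define X where "X = (\<integral>\<^sup>+y. ennreal (f y * (norm (y - u))\<^sup>2) \<partial>lborel)"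
  define d where "d = real DIM('a)"
  have "(\<integral>\<^sup>+v. ennreal (conv f (psi \<epsilon>) v * (norm (v - u))\<^sup>2) \<partial>lborel) = ennreal (A * (S * d))"
    using nn_integral_psi_mult_norm_power2[OF S, of u u] A
    by (simp add: conv_eq ennreal_mult' mult.assoc nn_integral_cmult d_def)
  moreover have "(\<integral>\<^sup>+v. ennreal (conv f (psi \<epsilon>) v * (norm (v - u))\<^sup>2) \<partial>lborel) = X + ennreal (\<epsilon> * d * A)"
  proof -
    have "(\<integral>\<^sup>+v. ennreal (conv f (psi \<epsilon>) v * (norm (v - u))\<^sup>2) \<partial>lborel)
        = (\<integral>\<^sup>+y. ennreal (f y) * ennreal ((norm (y - u))\<^sup>2 + \<epsilon> * d) \<partial>lborel)"
      using nn_integral_conv_psi_mult[OF f_int f_nonneg \<epsilon>, of "\<lambda>v. (norm (v - u))\<^sup>2"]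
      by (simp add: nn_integral_psi_mult_norm_power2[OF \<epsilon>] d_def)
    also have "\<dots> = (\<integral>\<^sup>+y. ennreal (f y * (norm (y - u))\<^sup>2) + ennreal (\<epsilon> * d) * ennreal (f y) \<partial>lborel)"
      using f_nonneg \<epsilon> by (intro nn_integral_cong) (simp add: d_def ennreal_mult'[symmetric] ennreal_plus[symmetric]
        distrib_left mult_ac del: ennreal_plus)
    also have "\<dots> = X + ennreal (\<epsilon> * d) * ennreal (\<integral>y. f y \<partial>lborel)"
      using f_int f_nonneg by (simp add: X_def nn_integral_add nn_integral_cmult nn_integral_eq_integral)
    finally show ?thesis
      using integral_eq_if_conv_psi_eq \<epsilon> A by (simp add: d_def ennreal_mult)
  qed
  moreover have "A * (S * d) \<le> A * (\<epsilon> * d)"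
    using \<open>\<not> S > \<epsilon>\<close> A by (intro mult_left_mono mult_right_mono) (auto simp: d_def)
  then have "A * (S * d) \<le> \<epsilon> * d * A"
    by (simp add: mult_ac)
  ultimately have "ennreal (\<epsilon> * d * A) + X \<le> ennreal (\<epsilon> * d * A) + 0"
    by (metis add.commute add.right_neutral ennreal_leI)
  then have "X = 0"
    by (subst (asm) ennreal_add_left_cancel_le) auto
  then have "AE y in lborel. f y * (norm (y - u))\<^sup>2 = 0"
    unfolding X_def using f_nonneg by (subst (asm) nn_integral_0_iff_AE) auto
  then have "AE y in lborel. f y = 0"
    using AE_lborel_singleton[of u] by eventually_elim simp
  with nonzero show False
    by simp
qed

end

lemma AE_eq_psi_if_conv_psi_eq:
  fixes f :: "'a::euclidean_space \<Rightarrow> real"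
  assumes f_int: "integrable lborel f" and \<epsilon>: "\<epsilon> > 0" and T: "T > 0"
    and conv_eq: "\<And>v. conv f (psi \<epsilon>) v = A * psi (\<epsilon> + T) (v - u)"
  shows "AE y in lborel. f y = A * psi T (y - u)"
proof -
  define K where "K y = f y - A * psi T (y - u)" for y
  have K_int: "integrable lborel K"
    unfolding K_def using f_int integrable_psi[OF T, of u] by simp
  have "conv K (psi \<epsilon>) v = 0" for v
  proof -
    have "conv K (psi \<epsilon>) v = (\<integral>y. f y * psi \<epsilon> (v - y) - A * (psi \<epsilon> (v - y) * psi T (y - u)) \<partial>lborel)"
      unfolding K_def conv_def by (intro Bochner_Integration.integral_cong refl) (simp add: algebra_simps)
    also have "\<dots> = conv f (psi \<epsilon>) v - A * (\<integral>y. psi \<epsilon> (v - y) * psi T (y - u) \<partial>lborel)"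
      using integrable_conv_psi[OF f_int \<epsilon>, of v] integrable_psi_mult_psi[OF \<epsilon> T, of v u]
      by (simp add: conv_def)
    finally show ?thesis
      by (simp add: conv_eq integral_psi_mult_psi[OF \<epsilon> T])
  qed
  then have "AE y in lborel. K y = 0"
    by (rule AE_eq_0_if_conv_psi_eq_0[OF K_int \<epsilon>])
  then show ?thesis
    by eventually_elim (simp add: K_def)
qed

lemma maxwellian_eq_psi: "T > 0 \<Longrightarrow> maxwellian \<rho> u T v = \<rho> * psi T (v - u)"
  unfolding maxwellian_def psi_def by (simp add: powr_minus_divide)

lemma maxwellian_if_conv_psi_eq_exp_quadratic:
  fixes f :: "'a::euclidean_space \<Rightarrow> real" and l1 :: 'a
  assumes f_int: "integrable lborel f" and f_nonneg: "\<And>y. f y \<ge> 0"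
    and nonzero: "\<not> (AE v in lborel. f v = 0)" and \<epsilon>: "\<epsilon> > 0"
    and conv_eq: "\<And>v. conv f (psi \<epsilon>) v = exp (a + l1 \<bullet> v + l2 / 2 * (norm v)\<^sup>2)"
  shows "l2 < 0" and "\<epsilon> * \<bar>l2\<bar> < 1"
    and "AE v in lborel. f v = maxwellian (exp (a + (norm l1)\<^sup>2 / (2 * \<bar>l2\<bar>)) * (2 * pi / \<bar>l2\<bar>) powr (real DIM('a) / 2))
          ((1 / \<bar>l2\<bar>) *\<^sub>R l1) (1 / \<bar>l2\<bar> - \<epsilon>) v"
proof -
  have "conv f (psi \<epsilon>) = (\<lambda>v. exp (a + l1 \<bullet> v + l2 / 2 * (norm v)\<^sup>2))"
    by (intro ext conv_eq)
  then have "integrable lborel (\<lambda>v. exp (a + l1 \<bullet> v + l2 / 2 * (norm v)\<^sup>2))"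
    using integrable_conv_psi_fun[OF f_int f_nonneg \<epsilon>] by simp
  then have "l2 / 2 < 0"
    by (rule quadratic_coeff_neg_if_integrable_exp)
  then show neg: "l2 < 0"
    by simp
  define \<rho> where "\<rho> = exp (a + (norm l1)\<^sup>2 / (2 * \<bar>l2\<bar>)) * (2 * pi / \<bar>l2\<bar>) powr (real DIM('a) / 2)"
  define S where "S = 1 / \<bar>l2\<bar>"
  define u where "u = (1 / \<bar>l2\<bar>) *\<^sub>R l1"
  have S: "S > 0" and \<rho>: "\<rho> \<ge> 0"
    using neg by (simp_all add: S_def \<rho>_def)
  have conv_psi: "conv f (psi \<epsilon>) v = \<rho> * psi S (v - u)" for v
    unfolding conv_eq exp_quadratic_eq_psi[OF neg] \<rho>_def S_def u_def ..
  have "S > \<epsilon>"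
    by (rule variance_gt_if_conv_psi_eq[OF f_int f_nonneg \<epsilon> S \<rho> conv_psi nonzero])
  then have "\<epsilon> * \<bar>l2\<bar> < S * \<bar>l2\<bar>"
    using neg by (intro mult_strict_right_mono) auto
  then show "\<epsilon> * \<bar>l2\<bar> < 1"
    using neg by (simp add: S_def)
  have "AE v in lborel. f v = \<rho> * psi (S - \<epsilon>) (v - u)"
    by (rule AE_eq_psi_if_conv_psi_eq[OF f_int \<epsilon>]) (use \<open>S > \<epsilon>\<close> conv_psi in simp_all)
  then have "AE v in lborel. f v = maxwellian \<rho> u (S - \<epsilon>) v"
    using \<open>S > \<epsilon>\<close> by (simp add: maxwellian_eq_psi)
  then show "AE v in lborel. f v = maxwellian (exp (a + (norm l1)\<^sup>2 / (2 * \<bar>l2\<bar>)) * (2 * pi / \<bar>l2\<bar>) powr (real DIM('a) / 2))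
          ((1 / \<bar>l2\<bar>) *\<^sub>R l1) (1 / \<bar>l2\<bar> - \<epsilon>) v"
    by (simp only: \<rho>_def u_def S_def)
qed

lemma partial_fractions_eq:
  fixes L \<epsilon> n :: real
  assumes L: "L > 0" and D: "\<epsilon> * L < 1"
  shows "- \<epsilon> * n / (2 * (1 - \<epsilon> * L)) + n / (2 * L * (1 - \<epsilon> * L)) = n / (2 * L)"
proof -
  define D where "D = 1 - \<epsilon> * L"
  have "D \<noteq> 0"
    using D by (simp add: D_def)
  then have "- \<epsilon> * n / (2 * D) + n / (2 * L * D) = n * (1 - \<epsilon> * L) / (2 * L * D)"
    using L by (simp add: field_simps)
  also have "\<dots> = n / (2 * L)"
    using \<open>D \<noteq> 0\<close> by (simp add: D_def[symmetric])
  finally show ?thesis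
    by (simp add: D_def)
qed

theorem lemma7:
  fixes f :: "'a::euclidean_space \<Rightarrow> real"
    and \<epsilon> l0 l2 :: real and l1 :: 'a
  assumes dim: "DIM('a) \<ge> 2"
    and eps: "\<epsilon> > 0"
    and f_meas: "f \<in> borel_measurable lborel"
    and f_int: "integrable lborel f"
    and f_nonneg: "\<And>v. f v \<ge> 0"
    and f_nonzero: "\<not> (AE v in lborel. f v = 0)"
    and conv_def: "\<And>v. integrable lborel (\<lambda>y. psi \<epsilon> y * ln (conv f (psi \<epsilon>) (v - y)))"
    and eq: "\<And>v. conv (psi \<epsilon>) (\<lambda>w. ln (conv f (psi \<epsilon>) w)) v
                  = l0 + inner l1 v + l2 / 2 * (norm v)\<^sup>2"
  shows "l2 \<noteq> 0 \<and> \<epsilon> * \<bar>l2\<bar> < 1 \<and>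
    (AE v in lborel. f v = maxwellian
        ((2 * pi / \<bar>l2\<bar>) powr (real DIM('a) / 2) *
           exp (l0 + \<epsilon> * \<bar>l2\<bar> * real DIM('a) / 2
                - \<epsilon> * (norm l1)\<^sup>2 / (2 * (1 - \<epsilon> * \<bar>l2\<bar>))
                + (norm l1)\<^sup>2 / (2 * \<bar>l2\<bar> * (1 - \<epsilon> * \<bar>l2\<bar>))))
        ((1 / \<bar>l2\<bar>) *\<^sub>R l1)
        (1 / \<bar>l2\<bar> - \<epsilon>) v)"
proof -
  define a where "a = l0 - l2 * \<epsilon> * real DIM('a) / 2"
  have conv_eq: "conv f (psi \<epsilon>) v = exp (a + l1 \<bullet> v + l2 / 2 * (norm v)\<^sup>2)" for v
    unfolding a_def by (rule conv_psi_eq_exp_quadratic[OF eps f_int f_nonneg f_nonzero conv_def eq])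
  note maxwellian = maxwellian_if_conv_psi_eq_exp_quadratic[OF f_int f_nonneg f_nonzero eps conv_eq]
  have "a = l0 + \<epsilon> * \<bar>l2\<bar> * real DIM('a) / 2"
    using maxwellian(1) by (simp add: a_def)
  then have "a + (norm l1)\<^sup>2 / (2 * \<bar>l2\<bar>) = l0 + \<epsilon> * \<bar>l2\<bar> * real DIM('a) / 2
      - \<epsilon> * (norm l1)\<^sup>2 / (2 * (1 - \<epsilon> * \<bar>l2\<bar>)) + (norm l1)\<^sup>2 / (2 * \<bar>l2\<bar> * (1 - \<epsilon> * \<bar>l2\<bar>))"
    using partial_fractions_eq[of "\<bar>l2\<bar>" \<epsilon> "(norm l1)\<^sup>2"] maxwellian(1,2) by simp
  then have \<rho>: "exp (a + (norm l1)\<^sup>2 / (2 * \<bar>l2\<bar>)) * (2 * pi / \<bar>l2\<bar>) powr (real DIM('a) / 2)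
      = (2 * pi / \<bar>l2\<bar>) powr (real DIM('a) / 2) * exp (l0 + \<epsilon> * \<bar>l2\<bar> * real DIM('a) / 2
          - \<epsilon> * (norm l1)\<^sup>2 / (2 * (1 - \<epsilon> * \<bar>l2\<bar>)) + (norm l1)\<^sup>2 / (2 * \<bar>l2\<bar> * (1 - \<epsilon> * \<bar>l2\<bar>)))"
    by (simp only: mult.commute)
  have "l2 \<noteq> 0"
    using maxwellian(1) by simp
  then show ?thesis
    using maxwellian(2) maxwellian(3)[unfolded \<rho>] by blast
qed

end
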